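(* Let $A$ and $B$ be strongly regular graphs with the same parameters $(n,d,\lambda,\mu)$ (possibly $A\cong B$). Let $A'$ and $B'$ be partially colored versions in which the colored vertices are $a_1,\dots,a_m\in V(A)$ and $b_1,\dots,b_m\in V(B)$, with $a_i$ and $b_i$ both colored $i$, each color $1,\dots,m$ occurring exactly once in each graph and all other vertices uncolored. Let $G=G(A',B')$ and $H=G(A',A')$ (the latter built from two vertex-disjoint copies of $A'$). (1) If $\mathrm{WL}_1(A')\ne\mathrm{WL}_1(B')$, then $\mathrm{WL}_1(G)\ne\mathrm{WL}_1(H)$. (2) If for some $r\ge1$ the multisets of 1-WL colors after $r$ rounds coincide, $\{\!\{C^r_{A'}(x)\}\!\}_{x\in V(A)}=\{\!\{C^r_{B'}(x)\}\!\}_{x\in V(B)}$, then $\omega^{(r-1)}(G)=\omega^{(r-1)}(H)$.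
   Context: Graphs are finite, simple and undirected. A strongly regular graph with parameters $(n,d,\lambda,\mu)$ is an $n$-vertex $d$-regular graph in which any two adjacent vertices have $\lambda$ common neighbours and any two distinct non-adjacent vertices have $\mu$ common neighbours. Construction $G(A',B')$ (uncolored graph): take the vertex-disjoint union of $A$ and $B$; for each $i=1,\dots,m$ add a new connecting vertex $c_i$ adjacent to $a_i$ and $b_i$, and $i$ new pendant vertices $p_{i,1},\dots,p_{i,i}$, each of degree $1$ and adjacent only to $c_i$. All colors are discarded. Color refinement (1-WL) on a vertex-colored graph $X$ with $N$ vertices: $C^0_X(x)$ is the color of $x$ (a common default color for uncolored vertices), $C^{r+1}_X(x)=\big(C^r_X(x),\{\!\{C^r_X(y)\}\!\}_{y\in N(x)}\big)$, with $\{\!\{\cdot\}\!\}$ a multiset; $\mathrm{WL}_1(X)=\{\!\{C^N_X(x)\}\!\}_{x\in V(X)}$. Let $w_k(x,y)$ be the number of walks of length $k$ from $x$ to $y$ in an $N$-vertex graph and $w_*(x,y)=(w_0(x,y),\dots,w_{N-1}(x,y))$. Define $\omega_0(x)=w_*(x,x)$, $\omega_{r+1}(x)=\big(\omega_r(x),\{\!\{(w_*(x,y),\omega_r(y))\}\!\}_{y}\big)$ and $\omega^{(r)}(G)=\{\!\{\omega_r(x)\}\!\}_{x\in V(G)}$. *)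

theory Defs
  imports Main "HOL-Library.Multiset"
begin

definition nbrs :: "'v set \<Rightarrow> ('v \<Rightarrow> 'v \<Rightarrow> bool) \<Rightarrow> 'v \<Rightarrow> 'v set" where
  "nbrs V E x = {y \<in> V. E x y}"

definition srg :: "'v set \<Rightarrow> ('v \<Rightarrow> 'v \<Rightarrow> bool) \<Rightarrow> nat \<Rightarrow> nat \<Rightarrow> nat \<Rightarrow> nat \<Rightarrow> bool" where
  "srg V E n d l mu \<longleftrightarrow>
     finite V \<and> card V = n \<and>
     (\<forall>x y. E x y \<longrightarrow> x \<in> V \<and> y \<in> V) \<and>
     (\<forall>x y. E x y \<longrightarrow> E y x) \<and> (\<forall>x. \<not> E x x) \<and>
     (\<forall>x\<in>V. card (nbrs V E x) = d) \<and>
     (\<forall>x\<in>V. \<forall>y\<in>V. x \<noteq> y \<and> E x y \<longrightarrow> card {z\<in>V. E x z \<and> E y z} = l) \<and>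
     (\<forall>x\<in>V. \<forall>y\<in>V. x \<noteq> y \<and> \<not> E x y \<longrightarrow> card {z\<in>V. E x z \<and> E y z} = mu)"

text \<open>Partial colouring: a i gets colour i (1 \<le> i \<le> m); uncoloured vertices get the default colour 0.\<close>

definition col_of :: "(nat \<Rightarrow> 'v) \<Rightarrow> nat \<Rightarrow> 'v \<Rightarrow> nat" where
  "col_of a m x = (if \<exists>i. 1 \<le> i \<and> i \<le> m \<and> a i = x
                   then (THE i. 1 \<le> i \<and> i \<le> m \<and> a i = x) else 0)"

datatype wlc = WLInit nat | WLStep wlc "wlc multiset"

fun cr :: "'v set \<Rightarrow> ('v \<Rightarrow> 'v \<Rightarrow> bool) \<Rightarrow> ('v \<Rightarrow> nat) \<Rightarrow> nat \<Rightarrow> 'v \<Rightarrow> wlc" where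
  "cr V E c 0 x = WLInit (c x)"
| "cr V E c (Suc r) x = WLStep (cr V E c r x) (image_mset (cr V E c r) (mset_set (nbrs V E x)))"

definition WL1 :: "'v set \<Rightarrow> ('v \<Rightarrow> 'v \<Rightarrow> bool) \<Rightarrow> ('v \<Rightarrow> nat) \<Rightarrow> wlc multiset" where
  "WL1 V E c = image_mset (cr V E c (card V)) (mset_set V)"

datatype ('a, 'b) cv = LV 'a | RV 'b | CV nat | PV nat nat

definition constr_V :: "'a set \<Rightarrow> 'b set \<Rightarrow> nat \<Rightarrow> ('a, 'b) cv set" where
  "constr_V VA VB m = LV ` VA \<union> RV ` VB \<union> CV ` {1..m} \<union>
     {PV i j | i j. 1 \<le> i \<and> i \<le> m \<and> 1 \<le> j \<and> j \<le> i}"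

fun constr_E0 :: "('a \<Rightarrow> 'a \<Rightarrow> bool) \<Rightarrow> ('b \<Rightarrow> 'b \<Rightarrow> bool) \<Rightarrow> (nat \<Rightarrow> 'a) \<Rightarrow> (nat \<Rightarrow> 'b) \<Rightarrow> nat
    \<Rightarrow> ('a, 'b) cv \<Rightarrow> ('a, 'b) cv \<Rightarrow> bool" where
  "constr_E0 EA EB a b m (LV x) (LV y) = EA x y"
| "constr_E0 EA EB a b m (RV x) (RV y) = EB x y"
| "constr_E0 EA EB a b m (CV i) (LV x) = (1 \<le> i \<and> i \<le> m \<and> x = a i)"
| "constr_E0 EA EB a b m (CV i) (RV y) = (1 \<le> i \<and> i \<le> m \<and> y = b i)"
| "constr_E0 EA EB a b m (PV i j) (CV k) = (k = i \<and> 1 \<le> i \<and> i \<le> m \<and> 1 \<le> j \<and> j \<le> i)"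
| "constr_E0 EA EB a b m _ _ = False"

definition constr_E :: "('a \<Rightarrow> 'a \<Rightarrow> bool) \<Rightarrow> ('b \<Rightarrow> 'b \<Rightarrow> bool) \<Rightarrow> (nat \<Rightarrow> 'a) \<Rightarrow> (nat \<Rightarrow> 'b) \<Rightarrow> nat
    \<Rightarrow> ('a, 'b) cv \<Rightarrow> ('a, 'b) cv \<Rightarrow> bool" where
  "constr_E EA EB a b m x y = (constr_E0 EA EB a b m x y \<or> constr_E0 EA EB a b m y x)"

fun walks :: "'v set \<Rightarrow> ('v \<Rightarrow> 'v \<Rightarrow> bool) \<Rightarrow> nat \<Rightarrow> 'v \<Rightarrow> 'v \<Rightarrow> nat" where
  "walks V E 0 x y = (if x = y then 1 else 0)"
| "walks V E (Suc k) x y = (\<Sum>z\<in>nbrs V E x. walks V E k z y)"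

definition wstar :: "'v set \<Rightarrow> ('v \<Rightarrow> 'v \<Rightarrow> bool) \<Rightarrow> 'v \<Rightarrow> 'v \<Rightarrow> nat list" where
  "wstar V E x y = map (\<lambda>k. walks V E k x y) [0..<card V]"

datatype omc = OmInit "nat list" | OmStep omc "(nat list \<times> omc) multiset"

fun omega :: "'v set \<Rightarrow> ('v \<Rightarrow> 'v \<Rightarrow> bool) \<Rightarrow> nat \<Rightarrow> 'v \<Rightarrow> omc" where
  "omega V E 0 x = OmInit (wstar V E x x)"
| "omega V E (Suc r) x = OmStep (omega V E r x) (image_mset (\<lambda>y. (wstar V E x y, omega V E r y)) (mset_set V))"

definition omega_ms :: "'v set \<Rightarrow> ('v \<Rightarrow> 'v \<Rightarrow> bool) \<Rightarrow> nat \<Rightarrow> omc multiset" where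
  "omega_ms V E r = image_mset (omega V E r) (mset_set V)"

end

theory Submission
  imports Defs
begin

text \<open>
  For \<open>d \<ge> 1\<close> the pendant vertices of \<open>G(A', B')\<close> are exactly the vertices of degree
  one next to a vertex of degree at least three, and the connecting vertex \<open>c_i\<close> is the one with
  \<open>i\<close> pendant neighbours, i.e. of degree \<open>i + 2\<close>. So after three rounds the uncoloured refinement
  of \<open>G(A', B')\<close> knows the colour of every original vertex in \<open>A'\<close> or \<open>B'\<close>, and from then on it
  simulates the refinements of \<open>A'\<close> and \<open>B'\<close>. Hence equal \<open>WL\<^sub>1\<close> multisets of \<open>G(A', B')\<close> and
  \<open>G(A', A')\<close> give equal \<open>WL\<^sub>1\<close> multisets of \<open>B'\<close> and \<open>A'\<close>; if \<open>d = 0\<close> or \<open>m = 0\<close> the latter agree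
  anyway.

  Because \<open>A\<close> and \<open>B\<close> are strongly regular with the same parameters, the walk counts
  \<open>w\<^sub>k(x, y)\<close> satisfy a linear recursion over finitely many indicator-like functions whose
  coefficients depend only on the round-one colour data of \<open>y\<close> and on the adjacency among the
  marked vertices, which round one of the refinement already reveals. Thus \<open>w\<^sub>*(x, y)\<close> depends
  only on local data, and by induction \<open>\<omega>\<^sub>s\<close> of a vertex depends only on its side and its
  colour after \<open>s + 1\<close> rounds in \<open>A'\<close> or \<open>B'\<close>, whose multisets agree by hypothesis.
\<close>

section \<open>Multisets and colour refinement\<close>

lemma image_mset_eq_transfer:
  assumes fin: "finite S1" "finite S2"
    and eq: "image_mset f (mset_set S1) = image_mset g (mset_set S2)"
    and det: "\<And>u v. u \<in> S1 \<Longrightarrow> v \<in> S2 \<Longrightarrow> f u = g v \<Longrightarrow> h u = h' v"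
  shows "image_mset h (mset_set S1) = image_mset h' (mset_set S2)"
proof -
  have range_eq: "f ` S1 = g ` S2"
    using arg_cong[OF eq, of set_mset] fin by simp
  define H where "H c = (if c \<in> f ` S1 then h (SOME u. u \<in> S1 \<and> f u = c) else h' (SOME v. v \<in> S2 \<and> g v = c))" for c
  have some_rep: "\<exists>u. u \<in> S1 \<and> f u = c \<and> H c = h u" if "c \<in> f ` S1" for c
  proof -
    have "\<exists>u. u \<in> S1 \<and> f u = c" using that by blast
    from someI_ex[OF this] show ?thesis using that unfolding H_def by auto
  qed
  have h_H: "h u = H (f u)" if u: "u \<in> S1" for u
  proof -
    have "f u \<in> g ` S2" using u range_eq by blast
    then obtain v where v: "v \<in> S2" "g v = f u" by (auto simp: image_iff)
    obtain u' where u': "u' \<in> S1" "f u' = f u" "H (f u) = h u'" using some_rep u by blast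
    show ?thesis using det[OF u'(1) v(1)] det[OF u v(1)] v(2) u'(2,3) by simp
  qed
  have h'_H: "h' v = H (g v)" if v: "v \<in> S2" for v
  proof -
    have "g v \<in> f ` S1" using v range_eq by blast
    then obtain u' where u': "u' \<in> S1" "f u' = g v" "H (g v) = h u'" using some_rep by blast
    show ?thesis using det[OF u'(1) v] u'(2,3) by simp
  qed
  have "image_mset h (mset_set S1) = image_mset (H \<circ> f) (mset_set S1)"
    by (rule image_mset_cong) (simp add: h_H fin(1))
  also have "\<dots> = image_mset H (image_mset f (mset_set S1))"
    by (simp add: image_mset.compositionality)
  also have "\<dots> = image_mset H (image_mset g (mset_set S2))" using eq by simp
  also have "\<dots> = image_mset (H \<circ> g) (mset_set S2)"
    by (simp add: image_mset.compositionality)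
  also have "\<dots> = image_mset h' (mset_set S2)"
    by (rule image_mset_cong) (simp add: h'_H fin(2))
  finally show ?thesis .
qed

lemma nbrs_subset: "nbrs V E x \<subseteq> V"
  by (auto simp: nbrs_def)

lemma col_of_eq_iff:
  assumes "inj_on a {1..m}" and "1 \<le> i" "i \<le> m"
  shows "col_of a m x = i \<longleftrightarrow> a i = x"
proof -
  have "(THE i. 1 \<le> i \<and> i \<le> m \<and> a i = x) = j" if "1 \<le> j" "j \<le> m" "a j = x" for j
    using that assms(1) by (intro the_equality) (auto dest: inj_onD)
  thus ?thesis using assms(2,3) by (auto simp: col_of_def)
qed

lemma col_of_cases:
  assumes "inj_on a {1..m}"
  obtains "col_of a m x = 0"
    | "1 \<le> col_of a m x" "col_of a m x \<le> m" "a (col_of a m x) = x"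
proof (cases "\<exists>i. 1 \<le> i \<and> i \<le> m \<and> a i = x")
  case True
  then obtain i where "1 \<le> i" "i \<le> m" "a i = x" by blast
  with col_of_eq_iff[OF assms] that(2) show ?thesis by metis
next
  case False
  thus ?thesis by (intro that(1)) (auto simp: col_of_def)
qed

lemma image_mset_col_of:
  assumes "finite V" "a ` {1..m} \<subseteq> V" "inj_on a {1..m}"
  shows "image_mset (col_of a m) (mset_set V) = mset_set {1..m} + replicate_mset (card V - m) 0"
proof -
  define R where "R = V - a ` {1..m}"
  have "mset_set V = image_mset a (mset_set {1..m}) + mset_set R"
    using assms by (simp add: R_def image_mset_mset_set mset_set_Diff Diff_Un finite_subset
        flip: mset_set_Union)
  moreover have "image_mset (col_of a m) (image_mset a (mset_set {1..m})) = image_mset id (mset_set {1..m})"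
    unfolding image_mset.compositionality by (rule image_mset_cong) (simp add: col_of_eq_iff[OF assms(3)])
  moreover have "col_of a m z = 0" if "z \<in> R" for z
    using that by (cases rule: col_of_cases[OF assms(3), of z]) (force simp: R_def)+
  hence "image_mset (col_of a m) (mset_set R) = replicate_mset (card R) 0"
    using assms(1) by (subst image_mset_cong[where g="\<lambda>_. 0"]) (auto simp: R_def image_mset_const_eq)
  moreover have "card R = card V - m"
    using assms by (simp add: R_def card_Diff_subset card_image finite_subset)
  ultimately show ?thesis by simp
qed

lemma cr_Suc_eq_iff:
  "cr V E c (Suc k) x = cr V' E' c' (Suc k) x' \<longleftrightarrow>
     cr V E c k x = cr V' E' c' k x' \<and>
     image_mset (cr V E c k) (mset_set (nbrs V E x)) = image_mset (cr V' E' c' k) (mset_set (nbrs V' E' x'))"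
  by simp

lemma cr_eq_le:
  "cr V E c k x = cr V' E' c' k x' \<Longrightarrow> j \<le> k \<Longrightarrow> cr V E c j x = cr V' E' c' j x'"
  by (induction k) (auto simp del: cr.simps simp: cr_Suc_eq_iff le_Suc_eq)

fun wlc_prev :: "wlc \<Rightarrow> wlc" where
  "wlc_prev (WLStep p _) = p"
| "wlc_prev (WLInit c) = WLInit c"

lemma wlc_prev_funpow_cr: "(wlc_prev ^^ i) (cr V E c (j + i) x) = cr V E c j x"
  by (induction i) (simp_all add: funpow_Suc_right del: funpow.simps)

lemma cr_mset_eq_le:
  assumes "image_mset (cr V E c k) (mset_set V) = image_mset (cr V' E' c' k) (mset_set V')"
    and "j \<le> k"
  shows "image_mset (cr V E c j) (mset_set V) = image_mset (cr V' E' c' j) (mset_set V')"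
proof -
  obtain i where k: "k = j + i" using assms(2) le_Suc_ex by blast
  have "image_mset (cr V E c j) (mset_set V) = image_mset (wlc_prev ^^ i) (image_mset (cr V E c k) (mset_set V))"
    for V :: "'v set" and E c by (simp add: k wlc_prev_funpow_cr image_mset.compositionality comp_def del: cr.simps)
  thus ?thesis using assms(1) by metis
qed

lemma image_mset_vertex_profile:
  assumes "finite V" "x0 \<in> V" "\<not> E x0 x0"
  defines "R \<equiv> V - insert x0 (nbrs V E x0)"
  shows "image_mset (\<lambda>x. (x = x0, E x0 x, C x)) (mset_set V) =
      add_mset (True, False, C x0)
        (image_mset (\<lambda>v. (False, True, v)) (image_mset C (mset_set (nbrs V E x0)))
         + image_mset (\<lambda>v. (False, False, v)) (image_mset C (mset_set R)))"
proof -
  have N: "nbrs V E x0 \<subseteq> V" "x0 \<notin> nbrs V E x0" using assms(3) by (auto simp: nbrs_def)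
  have fin: "finite (nbrs V E x0)" "finite R" using assms(1) N(1) by (auto simp: R_def intro: finite_subset)
  have "V = insert x0 (nbrs V E x0 \<union> R)" using assms(2) N(1) by (auto simp: R_def)
  hence "mset_set V = add_mset x0 (mset_set (nbrs V E x0 \<union> R))"
    using fin N(2) by (metis finite_Un mset_set.insert Un_iff DiffE R_def insertI1)
  also have "mset_set (nbrs V E x0 \<union> R) = mset_set (nbrs V E x0) + mset_set R"
    using fin by (subst mset_set_Union) (auto simp: R_def)
  finally have "mset_set V = add_mset x0 (mset_set (nbrs V E x0) + mset_set R)" .
  moreover have "image_mset (\<lambda>x. (x = x0, E x0 x, C x)) (mset_set (nbrs V E x0))
      = image_mset (\<lambda>v. (False, True, v)) (image_mset C (mset_set (nbrs V E x0)))"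
    using fin N by (auto simp: image_mset.compositionality nbrs_def intro!: image_mset_cong)
  moreover have "image_mset (\<lambda>x. (x = x0, E x0 x, C x)) (mset_set R)
      = image_mset (\<lambda>v. (False, False, v)) (image_mset C (mset_set R))"
    using fin by (auto simp: image_mset.compositionality R_def nbrs_def intro!: image_mset_cong)
  ultimately show ?thesis using assms(3) by simp
qed

text \<open>The colours of the non-neighbours of \<open>x0\<close> are recovered by cancellation from the
  colour multiset of the whole graph.\<close>

lemma cr_profile_eq:
  assumes "finite V1" "finite V2" "x0 \<in> V1" "x0' \<in> V2" "\<not> E1 x0 x0" "\<not> E2 x0' x0'"
    and root: "cr V1 E1 c1 (Suc k) x0 = cr V2 E2 c2 (Suc k) x0'"
    and global: "image_mset (cr V1 E1 c1 k) (mset_set V1) = image_mset (cr V2 E2 c2 k) (mset_set V2)"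
  shows "image_mset (\<lambda>x. (x = x0, E1 x0 x, cr V1 E1 c1 k x)) (mset_set V1)
       = image_mset (\<lambda>x. (x = x0', E2 x0' x, cr V2 E2 c2 k x)) (mset_set V2)"
proof -
  define R1 where "R1 = V1 - insert x0 (nbrs V1 E1 x0)"
  define R2 where "R2 = V2 - insert x0' (nbrs V2 E2 x0')"
  note split1 = image_mset_vertex_profile[of V1 x0 E1 "cr V1 E1 c1 k", OF assms(1,3,5), folded R1_def]
  note split2 = image_mset_vertex_profile[of V2 x0' E2 "cr V2 E2 c2 k", OF assms(2,4,6), folded R2_def]
  have "image_mset (cr V1 E1 c1 k) (mset_set V1) = image_mset (snd \<circ> snd)
      (image_mset (\<lambda>x. (x = x0, E1 x0 x, cr V1 E1 c1 k x)) (mset_set V1))"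
    by (simp add: image_mset.compositionality comp_def)
  moreover have "image_mset (cr V2 E2 c2 k) (mset_set V2) = image_mset (snd \<circ> snd)
      (image_mset (\<lambda>x. (x = x0', E2 x0' x, cr V2 E2 c2 k x)) (mset_set V2))"
    by (simp add: image_mset.compositionality comp_def)
  ultimately have "image_mset (cr V1 E1 c1 k) (mset_set R1) = image_mset (cr V2 E2 c2 k) (mset_set R2)"
    using global root unfolding split1 split2 by (simp add: image_mset.compositionality comp_def)
  thus ?thesis using root unfolding split1 split2 by simp
qed

definition round1_colour :: "wlc \<Rightarrow> nat" where
  "round1_colour \<gamma> = (case \<gamma> of WLStep (WLInit c) _ \<Rightarrow> c | _ \<Rightarrow> 0)"

definition round1_nbr_colours :: "wlc \<Rightarrow> nat set" where
  "round1_nbr_colours \<gamma> = (case \<gamma> of WLStep _ M \<Rightarrow> {i. i \<noteq> 0 \<and> WLInit i \<in># M} | _ \<Rightarrow> {})"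

text \<open>The colour after \<open>k\<close> rounds of a vertex of colour \<open>c\<close> in a \<open>d\<close>-regular graph whose
  other vertices all have colour \<open>0\<close>.\<close>

primrec wl_regular :: "nat \<Rightarrow> nat \<Rightarrow> nat \<Rightarrow> wlc" where
  "wl_regular d 0 c = WLInit c"
| "wl_regular d (Suc k) c = WLStep (wl_regular d k c) (replicate_mset d (wl_regular d k 0))"

section \<open>Strongly regular graphs with marked vertices\<close>

locale coloured_srg =
  fixes V :: "'v set" and E :: "'v \<Rightarrow> 'v \<Rightarrow> bool" and a :: "nat \<Rightarrow> 'v" and m n d l mu :: nat
  assumes srg: "srg V E n d l mu"
    and marked_subset: "a ` {1..m} \<subseteq> V" and marked_inj: "inj_on a {1..m}"
begin

lemma finite_V: "finite V"
  and card_V: "card V = n"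
  and adj_in_V: "E x y \<Longrightarrow> x \<in> V \<and> y \<in> V"
  and adj_sym: "E x y \<Longrightarrow> E y x"
  and adj_irrefl: "\<not> E x x"
  and card_nbrs: "x \<in> V \<Longrightarrow> card (nbrs V E x) = d"
  and card_common_nbrs_adj:
    "x \<in> V \<Longrightarrow> y \<in> V \<Longrightarrow> x \<noteq> y \<Longrightarrow> E x y \<Longrightarrow> card {z\<in>V. E x z \<and> E y z} = l"
  and card_common_nbrs_nonadj:
    "x \<in> V \<Longrightarrow> y \<in> V \<Longrightarrow> x \<noteq> y \<Longrightarrow> \<not> E x y \<Longrightarrow> card {z\<in>V. E x z \<and> E y z} = mu"
  using srg unfolding srg_def by blast+

lemma finite_nbrs: "finite (nbrs V E s)"
  using finite_V by (simp add: nbrs_def)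

lemma mem_nbrs_iff: "t \<in> nbrs V E s \<longleftrightarrow> E s t"
  using adj_in_V by (auto simp: nbrs_def)

lemma marked_in_V: "1 \<le> i \<Longrightarrow> i \<le> m \<Longrightarrow> a i \<in> V"
  using marked_subset by (simp add: image_subset_iff)

lemma col_of_eq_marked_iff [simp]:
  "1 \<le> i \<Longrightarrow> i \<le> m \<Longrightarrow> col_of a m x = i \<longleftrightarrow> a i = x"
  "1 \<le> i \<Longrightarrow> i \<le> m \<Longrightarrow> i = col_of a m x \<longleftrightarrow> a i = x"
  using col_of_eq_iff[OF marked_inj] by metis+

lemma col_of_marked [simp]: "1 \<le> i \<Longrightarrow> i \<le> m \<Longrightarrow> col_of a m (a i) = i"
  by simp

lemma marked_eq_iff [simp]:
  "1 \<le> i \<Longrightarrow> i \<le> m \<Longrightarrow> 1 \<le> j \<Longrightarrow> j \<le> m \<Longrightarrow> a i = a j \<longleftrightarrow> i = j"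
  by (rule inj_on_eq_iff[OF marked_inj]) simp_all

lemma col_of_nonzero:
  "col_of a m s \<noteq> 0 \<Longrightarrow> 1 \<le> col_of a m s \<and> col_of a m s \<le> m \<and> a (col_of a m s) = s"
  by (cases rule: col_of_cases[OF marked_inj, of s]) simp_all

lemma col_cases:
  obtains "col_of a m s = 0" | i where "1 \<le> i" "i \<le> m" "s = a i"
  using col_of_nonzero by metis

lemma marked_at_eq: "{i\<in>{1..m}. a i = s} = (if col_of a m s = 0 then {} else {col_of a m s})"
  by (cases rule: col_cases[of s]) auto

lemma sum_adj_nbrs:
  assumes "s \<in> V" "t0 \<in> V"
  shows "(\<Sum>t\<in>nbrs V E s. (of_bool (E t0 t) :: int)) =
     (int d - int mu) * of_bool (s = t0) + (int l - int mu) * of_bool (E t0 s) + int mu"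
proof -
  have "nbrs V E s \<inter> {t. E t0 t} = {z\<in>V. E s z \<and> E t0 z}" by (auto simp: nbrs_def)
  hence "(\<Sum>t\<in>nbrs V E s. (of_bool (E t0 t) :: int)) = int (card {z\<in>V. E s z \<and> E t0 z})"
    using finite_nbrs by simp
  also have "\<dots> = (int d - int mu) * of_bool (s = t0) + (int l - int mu) * of_bool (E t0 s) + int mu"
  proof (cases "s = t0")
    case True
    hence "{z\<in>V. E s z \<and> E t0 z} = nbrs V E s" by (auto simp: nbrs_def)
    thus ?thesis using True card_nbrs[OF assms(1)] adj_irrefl by simp
  next
    case False
    thus ?thesis
      using card_common_nbrs_adj[OF assms False] card_common_nbrs_nonadj[OF assms False] adj_sym
      by (cases "E t0 s") auto
  qed
  finally show ?thesis .
qed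

lemma card_adj_nbrs:
  "s \<in> V \<Longrightarrow> t0 \<in> V \<Longrightarrow>
    card (nbrs V E s \<inter> Collect (E t0)) = (if s = t0 then d else if E t0 s then l else mu)"
  using sum_adj_nbrs[of s t0] adj_irrefl by (auto simp: finite_nbrs)

lemma round1_colour_cr: "round1_colour (cr V E (col_of a m) 1 s) = col_of a m s"
  by (simp add: round1_colour_def)

lemma round1_nbr_colours_cr:
  assumes "s \<in> V"
  shows "round1_nbr_colours (cr V E (col_of a m) 1 s) = {i\<in>{1..m}. E (a i) s}"
proof -
  have "round1_nbr_colours (cr V E (col_of a m) 1 s) = {i. i \<noteq> 0 \<and> (\<exists>z\<in>nbrs V E s. col_of a m z = i)}"
    using finite_nbrs by (auto simp: round1_nbr_colours_def)
  also have "\<dots> = {i\<in>{1..m}. E (a i) s}"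
    using col_of_nonzero by (force simp: mem_nbrs_iff intro: adj_sym)
  finally show ?thesis .
qed

lemma cr_degenerate:
  assumes "d = 0 \<or> m = 0" and "x \<in> V"
  shows "cr V E (col_of a m) k x = wl_regular d k (col_of a m x)"
  using assms(2)
proof (induction k arbitrary: x)
  case (Suc k)
  have "image_mset (cr V E (col_of a m) k) (mset_set (nbrs V E x)) = replicate_mset d (wl_regular d k 0)"
  proof (cases "d = 0")
    case True
    thus ?thesis using card_nbrs[OF Suc.prems] finite_nbrs by simp
  next
    case False
    hence "col_of a m = (\<lambda>_. 0)" using assms(1) by (simp add: col_of_def fun_eq_iff)
    hence "image_mset (cr V E (col_of a m) k) (mset_set (nbrs V E x))
        = image_mset (\<lambda>_. wl_regular d k 0) (mset_set (nbrs V E x))"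
      using Suc.IH finite_nbrs by (intro image_mset_cong) (auto simp: nbrs_def)
    thus ?thesis using card_nbrs[OF Suc.prems] by (simp add: image_mset_const_eq)
  qed
  thus ?case using Suc.IH[OF Suc.prems] by simp
qed simp

lemma WL1_degenerate:
  assumes "d = 0 \<or> m = 0"
  shows "WL1 V E (col_of a m) = image_mset (wl_regular d n) (mset_set {1..m} + replicate_mset (n - m) 0)"
proof -
  have "WL1 V E (col_of a m) = image_mset (wl_regular d n) (image_mset (col_of a m) (mset_set V))"
    unfolding WL1_def image_mset.compositionality card_V
    by (rule image_mset_cong) (use cr_degenerate[OF assms] finite_V in auto)
  thus ?thesis
    by (simp add: image_mset_col_of[OF finite_V marked_subset marked_inj] card_V)
qed

end

section \<open>The construction \<open>G(A', B')\<close>\<close>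

lemma mem_constr_V [simp]:
  "LV x \<in> constr_V VA VB m \<longleftrightarrow> x \<in> VA"
  "RV y \<in> constr_V VA VB m \<longleftrightarrow> y \<in> VB"
  "CV i \<in> constr_V VA VB m \<longleftrightarrow> 1 \<le> i \<and> i \<le> m"
  "PV i j \<in> constr_V VA VB m \<longleftrightarrow> 1 \<le> i \<and> i \<le> m \<and> 1 \<le> j \<and> j \<le> i"
  by (auto simp: constr_V_def)

fun gadget_vertex :: "nat \<times> nat \<Rightarrow> ('a, 'b) cv" where
  "gadget_vertex (i, j) = (if j = 0 then CV i else PV i j)"

definition gadget_index :: "nat \<Rightarrow> (nat \<times> nat) set" where
  "gadget_index m = {(i, 0) | i. 1 \<le> i \<and> i \<le> m} \<union> {(i, j) | i j. 1 \<le> i \<and> i \<le> m \<and> 1 \<le> j \<and> j \<le> i}"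

lemma finite_gadget_index: "finite (gadget_index m)"
  by (rule finite_subset[of _ "{0..m} \<times> {0..m}"]) (auto simp: gadget_index_def)

lemma inj_on_gadget_vertex: "inj_on gadget_vertex (gadget_index m)"
  by (auto simp: inj_on_def gadget_index_def)

lemma constr_V_eq:
  fixes VA :: "'a set" and VB :: "'b set"
  shows "constr_V VA VB m = LV ` VA \<union> RV ` VB \<union> gadget_vertex ` gadget_index m"
proof -
  have PV: "{PV i j | i j. 1 \<le> i \<and> i \<le> m \<and> 1 \<le> j \<and> j \<le> i}
      = (gadget_vertex ` {(i, j) | i j. 1 \<le> i \<and> i \<le> m \<and> 1 \<le> j \<and> j \<le> i} :: ('a, 'b) cv set)"
  proof (rule set_eqI, rule iffI)
    fix x assume "x \<in> {PV i j | i j. 1 \<le> i \<and> i \<le> m \<and> 1 \<le> j \<and> j \<le> i}"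
    then obtain i j where "x = gadget_vertex (i, j)" "1 \<le> i" "i \<le> m" "1 \<le> j" "j \<le> i" by auto
    thus "x \<in> gadget_vertex ` {(i, j) | i j. 1 \<le> i \<and> i \<le> m \<and> 1 \<le> j \<and> j \<le> i}" by blast
  qed auto
  have CV: "CV ` {1..m} = gadget_vertex ` {(i, 0) | i. 1 \<le> i \<and> i \<le> m}"
    by (auto simp: image_iff)
  show ?thesis
    unfolding constr_V_def gadget_index_def image_Un PV CV by (simp only: Un_assoc)
qed

lemma image_mset_constr_V:
  assumes "finite VA" "finite VB"
  shows "image_mset f (mset_set (constr_V VA VB m)) =
    image_mset (f \<circ> LV) (mset_set VA) + image_mset (f \<circ> RV) (mset_set VB)
    + image_mset (f \<circ> gadget_vertex) (mset_set (gadget_index m))"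
proof -
  have "mset_set (constr_V VA VB m)
      = mset_set (LV ` VA) + mset_set (RV ` VB) + mset_set (gadget_vertex ` gadget_index m)"
    unfolding constr_V_eq using assms finite_gadget_index
    by (subst mset_set_Union, simp_all, auto simp: gadget_index_def)
       (subst mset_set_Union, auto)
  also have "\<dots> = image_mset LV (mset_set VA) + image_mset RV (mset_set VB)
      + image_mset gadget_vertex (mset_set (gadget_index m))"
    by (simp add: image_mset_mset_set[OF inj_on_gadget_vertex] image_mset_mset_set inj_on_def)
  finally show ?thesis by (simp add: image_mset.compositionality)
qed

locale construction =
  A: coloured_srg VA EA a m n d l mu + B: coloured_srg VB EB b m n d l mu
  for VA :: "'a set" and EA a and VB :: "'b set" and EB b and m n d l mu
begin

abbreviation "V \<equiv> constr_V VA VB m"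
abbreviation "E \<equiv> constr_E EA EB a b m"

lemma finite_V: "finite V"
  using A.finite_V B.finite_V finite_gadget_index by (simp add: constr_V_eq)

lemma finite_nbrs: "finite (nbrs V E u)"
  by (rule finite_subset[OF nbrs_subset finite_V])

lemma nbrs_LV: "x \<in> VA \<Longrightarrow> nbrs V E (LV x) = LV ` nbrs VA EA x \<union> CV ` {i\<in>{1..m}. a i = x}"
  unfolding nbrs_def constr_E_def
  by (rule set_eqI, rename_tac z, case_tac z) (auto dest: A.adj_in_V A.adj_sym)

lemma nbrs_RV: "y \<in> VB \<Longrightarrow> nbrs V E (RV y) = RV ` nbrs VB EB y \<union> CV ` {i\<in>{1..m}. b i = y}"
  unfolding nbrs_def constr_E_def
  by (rule set_eqI, rename_tac z, case_tac z) (auto dest: B.adj_in_V B.adj_sym)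

lemma nbrs_CV: "1 \<le> i \<Longrightarrow> i \<le> m \<Longrightarrow> nbrs V E (CV i) = {LV (a i), RV (b i)} \<union> PV i ` {1..i}"
  unfolding nbrs_def constr_E_def
  by (rule set_eqI, rename_tac z, case_tac z) (auto simp: A.marked_in_V B.marked_in_V)

lemma nbrs_PV: "1 \<le> i \<Longrightarrow> i \<le> m \<Longrightarrow> 1 \<le> j \<Longrightarrow> j \<le> i \<Longrightarrow> nbrs V E (PV i j) = {CV i}"
  unfolding nbrs_def constr_E_def
  by (rule set_eqI, rename_tac z, case_tac z) auto

lemma nbrs_LV_col: "x \<in> VA \<Longrightarrow>
    nbrs V E (LV x) = LV ` nbrs VA EA x \<union> CV ` (if col_of a m x = 0 then {} else {col_of a m x})"
  by (subst A.marked_at_eq[symmetric]) (rule nbrs_LV)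

lemma nbrs_RV_col: "y \<in> VB \<Longrightarrow>
    nbrs V E (RV y) = RV ` nbrs VB EB y \<union> CV ` (if col_of b m y = 0 then {} else {col_of b m y})"
  by (subst B.marked_at_eq[symmetric]) (rule nbrs_RV)

lemma sum_nbrs_LV: "s \<in> VA \<Longrightarrow> (\<Sum>z\<in>nbrs V E (LV s). f z) =
    (\<Sum>t\<in>nbrs VA EA s. f (LV t)) + (if col_of a m s = 0 then 0 else f (CV (col_of a m s)))"
  by (cases "col_of a m s = 0")
    (auto simp: nbrs_LV_col A.finite_nbrs sum.reindex inj_on_def image_iff add.commute)

lemma sum_nbrs_RV: "s \<in> VB \<Longrightarrow> (\<Sum>z\<in>nbrs V E (RV s). f z) =
    (\<Sum>t\<in>nbrs VB EB s. f (RV t)) + (if col_of b m s = 0 then 0 else f (CV (col_of b m s)))"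
  by (cases "col_of b m s = 0")
    (auto simp: nbrs_RV_col B.finite_nbrs sum.reindex inj_on_def image_iff add.commute)

lemma sum_nbrs_CV: "1 \<le> k \<Longrightarrow> k \<le> m \<Longrightarrow> (\<Sum>z\<in>nbrs V E (CV k). f z) =
    f (LV (a k)) + f (RV (b k)) + (\<Sum>j\<in>{1..k}. f (PV k j))"
  by (simp add: nbrs_CV sum.reindex inj_on_def image_iff add.assoc)

lemma sum_nbrs_PV:
  "1 \<le> k \<Longrightarrow> k \<le> m \<Longrightarrow> 1 \<le> j \<Longrightarrow> j \<le> k \<Longrightarrow> (\<Sum>z\<in>nbrs V E (PV k j). f z) = f (CV k)"
  by (simp add: nbrs_PV)

lemma card_nbrs_LV: "x \<in> VA \<Longrightarrow> card (nbrs V E (LV x)) = d + (if col_of a m x = 0 then 0 else 1)"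
  using sum_nbrs_LV[of x "\<lambda>_. 1::nat"] by (simp add: A.card_nbrs)

lemma card_nbrs_RV: "x \<in> VB \<Longrightarrow> card (nbrs V E (RV x)) = d + (if col_of b m x = 0 then 0 else 1)"
  using sum_nbrs_RV[of x "\<lambda>_. 1::nat"] by (simp add: B.card_nbrs)

lemma card_nbrs_CV: "1 \<le> i \<Longrightarrow> i \<le> m \<Longrightarrow> card (nbrs V E (CV i)) = i + 2"
  using sum_nbrs_CV[of i "\<lambda>_. 1::nat"] by simp

lemma card_nbrs_PV: "1 \<le> i \<Longrightarrow> i \<le> m \<Longrightarrow> 1 \<le> j \<Longrightarrow> j \<le> i \<Longrightarrow> card (nbrs V E (PV i j)) = 1"
  by (simp add: nbrs_PV)

end

section \<open>Walk counts\<close>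

text \<open>For fixed \<open>y\<close>, the walk counts \<open>walks V E k x y\<close> are, as functions of \<open>x\<close>, integer
  combinations of the functions \<open>basis_fun y \<beta>\<close> below. Summing a basis function over the
  neighbourhood of \<open>x\<close> gives again such a combination, \<open>shift_basis\<close>; for the neighbourhoods
  inside \<open>A\<close> and \<open>B\<close> this is where the parameters \<open>\<lambda>\<close> and \<open>\<mu>\<close> enter. The coefficients depend
  only on the parameters, on \<open>vtype_of y\<close> and on the adjacency among the marked vertices
  (\<open>DA\<close>, \<open>DB\<close>).\<close>

datatype wbasis = Bvert | Bnbr | Bleft | Bright | Bmark_left nat | Bnbr_mark_left nat
  | Bmark_right nat | Bnbr_mark_right nat | Bconn nat | Bpend nat nat

datatype vtype = Tleft nat "nat set" | Tright nat "nat set" | Tconn nat | Tpend nat nat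

definition lincomb :: "(wbasis \<Rightarrow> 'v \<Rightarrow> int) \<Rightarrow> (int \<times> wbasis) list \<Rightarrow> 'v \<Rightarrow> int" where
  "lincomb f cs x = sum_list (map (\<lambda>(c, \<beta>). c * f \<beta> x) cs)"

lemma lincomb_Nil [simp]: "lincomb f [] x = 0"
  and lincomb_Cons [simp]: "lincomb f ((c, \<beta>) # cs) x = c * f \<beta> x + lincomb f cs x"
  and lincomb_append [simp]: "lincomb f (cs @ ds) x = lincomb f cs x + lincomb f ds x"
  by (simp_all add: lincomb_def)

lemma lincomb_scale: "lincomb f (map (\<lambda>(c', \<gamma>). (c * c', \<gamma>)) cs) x = c * lincomb f cs x"
  by (induction cs) (auto simp: algebra_simps)

lemma lincomb_unit_distinct:
  "distinct xs \<Longrightarrow> lincomb f (map (\<lambda>i. (1, g i)) xs) x = (\<Sum>i\<in>set xs. f (g i) x)"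
  by (simp add: lincomb_def sum_list_distinct_conv_sum_set)

lemma lincomb_cong: "(\<And>\<beta>. f \<beta> x = g \<beta> x') \<Longrightarrow> lincomb f cs x = lincomb g cs x'"
  by (induction cs) (auto simp: lincomb_def)

primrec shift_basis :: "nat \<Rightarrow> nat \<Rightarrow> nat \<Rightarrow> nat \<Rightarrow> (nat \<Rightarrow> nat \<Rightarrow> bool) \<Rightarrow> (nat \<Rightarrow> nat \<Rightarrow> bool)
    \<Rightarrow> vtype \<Rightarrow> wbasis \<Rightarrow> (int \<times> wbasis) list" where
  "shift_basis d l mu m DA DB \<tau> Bvert = (case \<tau> of
      Tleft c S \<Rightarrow> (1, Bnbr) # (if c \<noteq> 0 then [(1, Bconn c)] else [])
    | Tright c S \<Rightarrow> (1, Bnbr) # (if c \<noteq> 0 then [(1, Bconn c)] else [])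
    | Tconn i \<Rightarrow> [(1, Bmark_left i), (1, Bmark_right i)] @ map (\<lambda>j. (1, Bpend i j)) [1..<i+1]
    | Tpend i j \<Rightarrow> [(1, Bconn i)])"
| "shift_basis d l mu m DA DB \<tau> Bnbr = (case \<tau> of
      Tleft c S \<Rightarrow> [(int d - int mu, Bvert), (int l - int mu, Bnbr), (int mu, Bleft)]
        @ map (\<lambda>i. (1, Bconn i)) (filter (\<lambda>i. i \<in> S) [1..<m+1])
    | Tright c S \<Rightarrow> [(int d - int mu, Bvert), (int l - int mu, Bnbr), (int mu, Bright)]
        @ map (\<lambda>i. (1, Bconn i)) (filter (\<lambda>i. i \<in> S) [1..<m+1])
    | Tconn i \<Rightarrow> []
    | Tpend i j \<Rightarrow> [])"
| "shift_basis d l mu m DA DB \<tau> Bleft = (int d, Bleft) # map (\<lambda>i. (1, Bconn i)) [1..<m+1]"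
| "shift_basis d l mu m DA DB \<tau> Bright = (int d, Bright) # map (\<lambda>i. (1, Bconn i)) [1..<m+1]"
| "shift_basis d l mu m DA DB \<tau> (Bmark_left i) = [(1, Bnbr_mark_left i), (1, Bconn i)]"
| "shift_basis d l mu m DA DB \<tau> (Bnbr_mark_left i) = (if 1 \<le> i \<and> i \<le> m then
      [(int d - int mu, Bmark_left i), (int l - int mu, Bnbr_mark_left i), (int mu, Bleft)]
      @ map (\<lambda>j. (1, Bconn j)) (filter (\<lambda>j. DA i j) [1..<m+1]) else [])"
| "shift_basis d l mu m DA DB \<tau> (Bmark_right i) = [(1, Bnbr_mark_right i), (1, Bconn i)]"
| "shift_basis d l mu m DA DB \<tau> (Bnbr_mark_right i) = (if 1 \<le> i \<and> i \<le> m then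
      [(int d - int mu, Bmark_right i), (int l - int mu, Bnbr_mark_right i), (int mu, Bright)]
      @ map (\<lambda>j. (1, Bconn j)) (filter (\<lambda>j. DB i j) [1..<m+1]) else [])"
| "shift_basis d l mu m DA DB \<tau> (Bconn i) =
      [(1, Bmark_left i), (1, Bmark_right i)] @ map (\<lambda>j. (1, Bpend i j)) [1..<i+1]"
| "shift_basis d l mu m DA DB \<tau> (Bpend i j) =
      (if 1 \<le> j \<and> j \<le> i \<and> 1 \<le> i \<and> i \<le> m then [(1, Bconn i)] else [])"

definition shift_comb :: "nat \<Rightarrow> nat \<Rightarrow> nat \<Rightarrow> nat \<Rightarrow> (nat \<Rightarrow> nat \<Rightarrow> bool) \<Rightarrow> (nat \<Rightarrow> nat \<Rightarrow> bool)
    \<Rightarrow> vtype \<Rightarrow> (int \<times> wbasis) list \<Rightarrow> (int \<times> wbasis) list" where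
  "shift_comb d l mu m DA DB \<tau> cs =
     concat (map (\<lambda>(c, \<beta>). map (\<lambda>(c', \<gamma>). (c * c', \<gamma>)) (shift_basis d l mu m DA DB \<tau> \<beta>)) cs)"

fun walk_coeffs :: "nat \<Rightarrow> nat \<Rightarrow> nat \<Rightarrow> nat \<Rightarrow> (nat \<Rightarrow> nat \<Rightarrow> bool) \<Rightarrow> (nat \<Rightarrow> nat \<Rightarrow> bool)
    \<Rightarrow> vtype \<Rightarrow> nat \<Rightarrow> (int \<times> wbasis) list" where
  "walk_coeffs d l mu m DA DB \<tau> 0 = [(1, Bvert)]"
| "walk_coeffs d l mu m DA DB \<tau> (Suc k) = shift_comb d l mu m DA DB \<tau> (walk_coeffs d l mu m DA DB \<tau> k)"

context construction
begin

fun copy_adj :: "('a, 'b) cv \<Rightarrow> ('a, 'b) cv \<Rightarrow> bool" where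
  "copy_adj (LV t) (LV s) = EA t s"
| "copy_adj (RV t) (RV s) = EB t s"
| "copy_adj _ _ = False"

lemma copy_adj_irrefl: "\<not> copy_adj u u"
  by (cases u) (auto simp: A.adj_irrefl B.adj_irrefl)

lemma copy_adj_sym: "copy_adj u v = copy_adj v u"
  by (cases u; cases v) (auto intro: A.adj_sym B.adj_sym)

fun basis_fun :: "('a, 'b) cv \<Rightarrow> wbasis \<Rightarrow> ('a, 'b) cv \<Rightarrow> int" where
  "basis_fun y Bvert x = of_bool (x = y)"
| "basis_fun y Bnbr x = of_bool (copy_adj y x)"
| "basis_fun y Bleft x = of_bool (\<exists>s. x = LV s)"
| "basis_fun y Bright x = of_bool (\<exists>s. x = RV s)"
| "basis_fun y (Bmark_left i) x = of_bool (1 \<le> i \<and> i \<le> m \<and> x = LV (a i))"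
| "basis_fun y (Bnbr_mark_left i) x = of_bool (1 \<le> i \<and> i \<le> m \<and> (\<exists>s. x = LV s \<and> EA (a i) s))"
| "basis_fun y (Bmark_right i) x = of_bool (1 \<le> i \<and> i \<le> m \<and> x = RV (b i))"
| "basis_fun y (Bnbr_mark_right i) x = of_bool (1 \<le> i \<and> i \<le> m \<and> (\<exists>s. x = RV s \<and> EB (b i) s))"
| "basis_fun y (Bconn i) x = of_bool (x = CV i)"
| "basis_fun y (Bpend i j) x = of_bool (x = PV i j)"

definition vtype_of :: "('a, 'b) cv \<Rightarrow> vtype" where
  "vtype_of y = (case y of
       LV t \<Rightarrow> Tleft (col_of a m t) {i\<in>{1..m}. EA (a i) t}
     | RV t \<Rightarrow> Tright (col_of b m t) {i\<in>{1..m}. EB (b i) t}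
     | CV i \<Rightarrow> Tconn i
     | PV i j \<Rightarrow> Tpend i j)"

abbreviation "marked_adj_A \<equiv> (\<lambda>i j. 1 \<le> i \<and> i \<le> m \<and> 1 \<le> j \<and> j \<le> m \<and> EA (a i) (a j))"
abbreviation "marked_adj_B \<equiv> (\<lambda>i j. 1 \<le> i \<and> i \<le> m \<and> 1 \<le> j \<and> j \<le> m \<and> EB (b i) (b j))"

lemmas basis_simps = lincomb_unit_distinct vtype_of_def
  A.finite_nbrs B.finite_nbrs A.mem_nbrs_iff B.mem_nbrs_iff A.card_adj_nbrs B.card_adj_nbrs
  A.adj_irrefl B.adj_irrefl A.adj_sym B.adj_sym A.sum_adj_nbrs B.sum_adj_nbrs
  A.card_nbrs B.card_nbrs A.marked_in_V B.marked_in_V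

abbreviation "shift \<equiv> shift_basis d l mu m marked_adj_A marked_adj_B"

lemma sum_nbrs_basis_fun_LV:
  assumes "s \<in> VA" "y \<in> V"
  shows "(\<Sum>z\<in>nbrs V E (LV s). basis_fun y \<beta> z) = lincomb (basis_fun y) (shift (vtype_of y) \<beta>) (LV s)"
  using assms by (cases rule: A.col_cases[of s]; cases \<beta>; cases y)
    (auto simp: sum_nbrs_LV basis_simps simp del: upt_Suc)

lemma sum_nbrs_basis_fun_RV:
  assumes "s \<in> VB" "y \<in> V"
  shows "(\<Sum>z\<in>nbrs V E (RV s). basis_fun y \<beta> z) = lincomb (basis_fun y) (shift (vtype_of y) \<beta>) (RV s)"
  using assms by (cases rule: B.col_cases[of s]; cases \<beta>; cases y)
    (auto simp: sum_nbrs_RV basis_simps simp del: upt_Suc)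

lemma sum_nbrs_basis_fun_CV:
  assumes "1 \<le> k" "k \<le> m" "y \<in> V"
  shows "(\<Sum>z\<in>nbrs V E (CV k). basis_fun y \<beta> z) = lincomb (basis_fun y) (shift (vtype_of y) \<beta>) (CV k)"
  using assms by (cases \<beta>; cases y) (auto simp: sum_nbrs_CV basis_simps simp del: upt_Suc)

lemma sum_nbrs_basis_fun_PV:
  assumes "1 \<le> k" "k \<le> m" "1 \<le> j" "j \<le> k" "y \<in> V"
  shows "(\<Sum>z\<in>nbrs V E (PV k j). basis_fun y \<beta> z) = lincomb (basis_fun y) (shift (vtype_of y) \<beta>) (PV k j)"
  using assms by (cases \<beta>; cases y) (auto simp: sum_nbrs_PV basis_simps simp del: upt_Suc)

lemma sum_nbrs_basis_fun:
  "x \<in> V \<Longrightarrow> y \<in> V \<Longrightarrow>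
    (\<Sum>z\<in>nbrs V E x. basis_fun y \<beta> z) = lincomb (basis_fun y) (shift (vtype_of y) \<beta>) x"
  by (cases x) (simp_all add: sum_nbrs_basis_fun_LV sum_nbrs_basis_fun_RV
      sum_nbrs_basis_fun_CV sum_nbrs_basis_fun_PV)

lemma sum_nbrs_lincomb:
  assumes "x \<in> V" "y \<in> V"
  shows "(\<Sum>z\<in>nbrs V E x. lincomb (basis_fun y) cs z)
       = lincomb (basis_fun y) (shift_comb d l mu m marked_adj_A marked_adj_B (vtype_of y) cs) x"
proof (induction cs)
  case Nil
  then show ?case by (simp add: shift_comb_def)
next
  case (Cons p cs)
  obtain c \<beta> where p: "p = (c, \<beta>)" by (cases p)
  have "(\<Sum>z\<in>nbrs V E x. lincomb (basis_fun y) (p # cs) z) =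
        c * (\<Sum>z\<in>nbrs V E x. basis_fun y \<beta> z) + (\<Sum>z\<in>nbrs V E x. lincomb (basis_fun y) cs z)"
    by (simp add: p sum.distrib sum_distrib_left)
  also have "\<dots> = lincomb (basis_fun y) (shift_comb d l mu m marked_adj_A marked_adj_B (vtype_of y) (p # cs)) x"
    using sum_nbrs_basis_fun[OF assms] Cons by (simp add: p shift_comb_def lincomb_scale)
  finally show ?case .
qed

lemma walks_eq_lincomb:
  assumes "x \<in> V" "y \<in> V"
  shows "int (walks V E k x y)
       = lincomb (basis_fun y) (walk_coeffs d l mu m marked_adj_A marked_adj_B (vtype_of y) k) x"
  using assms(1)
proof (induction k arbitrary: x)
  case (Suc k)
  have "int (walks V E (Suc k) x y) = (\<Sum>z\<in>nbrs V E x. int (walks V E k z y))" by simp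
  also have "\<dots> = (\<Sum>z\<in>nbrs V E x. lincomb (basis_fun y) (walk_coeffs d l mu m marked_adj_A marked_adj_B (vtype_of y) k) z)"
    using Suc.IH nbrs_subset[of V E x] by (auto intro!: sum.cong)
  also have "\<dots> = lincomb (basis_fun y) (walk_coeffs d l mu m marked_adj_A marked_adj_B (vtype_of y) (Suc k)) x"
    using sum_nbrs_lincomb[OF Suc.prems assms(2)] by simp
  finally show ?case .
qed simp

end

section \<open>Walk refinement: part (2)\<close>

context construction
begin

text \<open>The data that determine \<open>omega s\<close> at a vertex: for an original vertex its side and its
  colour after \<open>s + 1\<close> rounds in \<open>A'\<close> or \<open>B'\<close>, for a gadget vertex the vertex itself.\<close>

definition round_key :: "nat \<Rightarrow> ('a, 'b) cv \<Rightarrow> (bool \<times> wlc) + (nat \<times> nat)" where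
  "round_key s u = (case u of
       LV x \<Rightarrow> Inl (False, cr VA EA (col_of a m) (Suc s) x)
     | RV y \<Rightarrow> Inl (True, cr VB EB (col_of b m) (Suc s) y)
     | CV i \<Rightarrow> Inr (i, 0)
     | PV i j \<Rightarrow> Inr (i, j))"

lemma round_key_gadget_vertex: "p \<in> gadget_index m \<Longrightarrow> round_key s (gadget_vertex p) = Inr p"
  by (auto simp: gadget_index_def round_key_def)

lemma gadget_vertex_eq_iff_round_key:
  "p \<in> gadget_index m \<Longrightarrow> u \<in> V \<Longrightarrow> gadget_vertex p = u \<longleftrightarrow> round_key s u = Inr p"
  by (cases p, cases u) (auto simp: gadget_index_def round_key_def)

lemma copy_adj_gadget_vertex: "copy_adj u (gadget_vertex p) = False"
  by (cases p; cases u) auto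

lemma vtype_of_LV:
  "s \<in> VA \<Longrightarrow> vtype_of (LV s) = Tleft (round1_colour (cr VA EA (col_of a m) 1 s))
     (round1_nbr_colours (cr VA EA (col_of a m) 1 s))"
  by (simp only: A.round1_colour_cr A.round1_nbr_colours_cr) (simp add: vtype_of_def)

lemma vtype_of_RV:
  "s \<in> VB \<Longrightarrow> vtype_of (RV s) = Tright (round1_colour (cr VB EB (col_of b m) 1 s))
     (round1_nbr_colours (cr VB EB (col_of b m) 1 s))"
  by (simp only: B.round1_colour_cr B.round1_nbr_colours_cr) (simp add: vtype_of_def)

end

locale construction_pair =
  G: construction VA EA a VB EB b m n d l mu + H: construction VA EA a VA EA a m n d l mu
  for VA :: "'a set" and EA a and VB :: "'b set" and EB b and m n d l mu
begin

abbreviation "wlA \<equiv> cr VA EA (col_of a m)"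
abbreviation "wlB \<equiv> cr VB EB (col_of b m)"

lemma basis_fun_eq:
  assumes "G.vtype_of x = H.vtype_of x'" and "(x = y) = (x' = y')"
    and "G.copy_adj y x = H.copy_adj y' x'"
  shows "G.basis_fun y \<beta> x = H.basis_fun y' \<beta> x'"
proof (cases x)
  case (LV s)
  then obtain s' where x': "x' = LV s'"
    using assms(1) by (cases x') (auto simp: G.vtype_of_def H.vtype_of_def)
  have "col_of a m s = col_of a m s'" and "\<And>i. 1 \<le> i \<Longrightarrow> i \<le> m \<Longrightarrow> EA (a i) s = EA (a i) s'"
    using assms(1) LV x' by (auto simp: G.vtype_of_def H.vtype_of_def set_eq_iff)
  moreover have "(s = a i) = (s' = a i)" if "1 \<le> i" "i \<le> m" for i
    using \<open>col_of a m s = col_of a m s'\<close> that G.A.col_of_eq_marked_iff by metis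
  ultimately show ?thesis using LV x' assms(2,3) by (cases \<beta>) auto
next
  case (RV s)
  then obtain s' where x': "x' = RV s'"
    using assms(1) by (cases x') (auto simp: G.vtype_of_def H.vtype_of_def)
  have "col_of b m s = col_of a m s'" and "\<And>i. 1 \<le> i \<Longrightarrow> i \<le> m \<Longrightarrow> EB (b i) s = EA (a i) s'"
    using assms(1) RV x' by (auto simp: G.vtype_of_def H.vtype_of_def set_eq_iff)
  moreover have "(s = b i) = (s' = a i)" if "1 \<le> i" "i \<le> m" for i
    using \<open>col_of b m s = col_of a m s'\<close> that G.A.col_of_eq_marked_iff G.B.col_of_eq_marked_iff by metis
  ultimately show ?thesis using RV x' assms(2,3) by (cases \<beta>) auto
next
  case (CV k)
  then have "x' = CV k" using assms(1) by (cases x') (auto simp: G.vtype_of_def H.vtype_of_def)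
  thus ?thesis using CV assms(2,3) by (cases \<beta>) auto
next
  case (PV k j)
  then have "x' = PV k j" using assms(1) by (cases x') (auto simp: G.vtype_of_def H.vtype_of_def)
  thus ?thesis using PV assms(2,3) by (cases \<beta>) auto
qed

lemma walks_eq:
  assumes "G.marked_adj_B = H.marked_adj_B"
    and x: "x \<in> G.V" and y: "y \<in> G.V" and x': "x' \<in> H.V" and y': "y' \<in> H.V"
    and vx: "G.vtype_of x = H.vtype_of x'" and vy: "G.vtype_of y = H.vtype_of y'"
    and "(x = y) = (x' = y')" and "G.copy_adj y x = H.copy_adj y' x'"
  shows "walks G.V G.E k x y = walks H.V H.E k x' y'"
proof -
  have "int (walks G.V G.E k x y)
      = lincomb (G.basis_fun y) (walk_coeffs d l mu m G.marked_adj_A G.marked_adj_B (G.vtype_of y) k) x"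
    by (rule G.walks_eq_lincomb[OF x y])
  also have "\<dots> = lincomb (H.basis_fun y') (walk_coeffs d l mu m G.marked_adj_A G.marked_adj_B (G.vtype_of y) k) x'"
    by (rule lincomb_cong) (rule basis_fun_eq[OF vx assms(8,9)])
  also have "\<dots> = int (walks H.V H.E k x' y')"
    using H.walks_eq_lincomb[OF x' y'] assms(1) vy by simp
  finally show ?thesis by simp
qed

lemma vtype_of_eq_if_round_key_eq:
  assumes "u \<in> G.V" "u' \<in> H.V" "G.round_key s u = H.round_key s u'"
  shows "G.vtype_of u = H.vtype_of u'"
proof (cases u)
  case (LV x)
  then obtain x' where x': "u' = LV x'"
    using assms(3) by (cases u') (auto simp: G.round_key_def H.round_key_def)
  have "wlA (Suc s) x = wlA (Suc s) x'"
    using assms(3) LV x' by (simp add: G.round_key_def H.round_key_def del: cr.simps)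
  hence "wlA 1 x = wlA 1 x'" by (rule cr_eq_le) simp
  thus ?thesis using LV x' assms(1,2) G.vtype_of_LV H.vtype_of_LV by simp
next
  case (RV y)
  then obtain x' where x': "u' = RV x'"
    using assms(3) by (cases u') (auto simp: G.round_key_def H.round_key_def)
  have "wlB (Suc s) y = wlA (Suc s) x'"
    using assms(3) RV x' by (simp add: G.round_key_def H.round_key_def del: cr.simps)
  hence "wlB 1 y = wlA 1 x'" by (rule cr_eq_le) simp
  thus ?thesis using RV x' assms(1,2) G.vtype_of_RV H.vtype_of_RV by simp
next
  case (CV i)
  then have "u' = CV i" using assms(2,3) by (cases u') (auto simp: G.round_key_def H.round_key_def)
  thus ?thesis using CV by (simp add: G.vtype_of_def H.vtype_of_def)
next
  case (PV i j)
  then have "u' = PV i j" using assms(1,3) by (cases u') (auto simp: G.round_key_def H.round_key_def)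
  thus ?thesis using PV by (simp add: G.vtype_of_def H.vtype_of_def)
qed

lemma round_key_eq_Suc_imp:
  assumes "G.round_key (Suc s) u = H.round_key (Suc s) u'"
  shows "G.round_key s u = H.round_key s u'"
proof (cases u)
  case (LV x)
  then obtain x' where x': "u' = LV x'"
    using assms by (cases u') (auto simp: G.round_key_def H.round_key_def)
  have "wlA (Suc (Suc s)) x = wlA (Suc (Suc s)) x'"
    using assms LV x' by (simp add: G.round_key_def H.round_key_def del: cr.simps)
  hence "wlA (Suc s) x = wlA (Suc s) x'" by (rule cr_eq_le) simp
  thus ?thesis using LV x' by (simp add: G.round_key_def H.round_key_def del: cr.simps)
next
  case (RV y)
  then obtain x' where x': "u' = RV x'"
    using assms by (cases u') (auto simp: G.round_key_def H.round_key_def)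
  have "wlB (Suc (Suc s)) y = wlA (Suc (Suc s)) x'"
    using assms RV x' by (simp add: G.round_key_def H.round_key_def del: cr.simps)
  hence "wlB (Suc s) y = wlA (Suc s) x'" by (rule cr_eq_le) simp
  thus ?thesis using RV x' by (simp add: G.round_key_def H.round_key_def del: cr.simps)
next
  case (CV i)
  thus ?thesis using assms by (cases u') (simp_all add: G.round_key_def H.round_key_def)
next
  case (PV i j)
  thus ?thesis using assms by (cases u') (simp_all add: G.round_key_def H.round_key_def)
qed

text \<open>By \<open>walks_eq\<close>, the walk counts between \<open>u\<close> and \<open>y\<close> depend only on this profile of \<open>y\<close>
  relative to \<open>u\<close>.\<close>

abbreviation (input) profile_G where
  "profile_G s u \<equiv> (\<lambda>y. (y = u, G.copy_adj u y, G.round_key s y))"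

abbreviation (input) profile_H where
  "profile_H s u' \<equiv> (\<lambda>y. (y = u', H.copy_adj u' y, H.round_key s y))"

lemma profile_left_eq:
  assumes "G.round_key (Suc s) u = H.round_key (Suc s) u'" "u \<in> G.V" "u' \<in> H.V"
  shows "image_mset (profile_G s u \<circ> LV) (mset_set VA) = image_mset (profile_H s u' \<circ> LV) (mset_set VA)"
proof (cases "\<exists>x0. u = LV x0")
  case True
  then obtain x0 where x0: "u = LV x0" by blast
  then obtain x0' where x0': "u' = LV x0'"
    using assms(1) by (cases u') (auto simp: G.round_key_def H.round_key_def)
  have in_V: "x0 \<in> VA" "x0' \<in> VA" using assms(2,3) x0 x0' by simp_all
  have "wlA (Suc (Suc s)) x0 = wlA (Suc (Suc s)) x0'"
    using assms(1) x0 x0' by (simp add: G.round_key_def H.round_key_def del: cr.simps)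
  hence "image_mset (\<lambda>x. (x = x0, EA x0 x, wlA (Suc s) x)) (mset_set VA)
      = image_mset (\<lambda>x. (x = x0', EA x0' x, wlA (Suc s) x)) (mset_set VA)"
    by (rule cr_profile_eq[OF G.A.finite_V G.A.finite_V in_V G.A.adj_irrefl G.A.adj_irrefl _ refl])
  hence "image_mset (\<lambda>(p, q, c). (p, q, Inl (False, c))) (image_mset (\<lambda>x. (x = x0, EA x0 x, wlA (Suc s) x)) (mset_set VA))
      = image_mset (\<lambda>(p, q, c). (p, q, Inl (False, c))) (image_mset (\<lambda>x. (x = x0', EA x0' x, wlA (Suc s) x)) (mset_set VA))"
    by simp
  thus ?thesis using x0 x0'
    by (simp add: G.round_key_def H.round_key_def image_mset.compositionality comp_def del: cr.simps)
next
  case False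
  hence "\<not> (\<exists>x. u' = LV x)"
    using assms(1) by (cases u; cases u') (auto simp: G.round_key_def H.round_key_def)
  thus ?thesis using False
    by (cases u; cases u') (auto simp: G.round_key_def H.round_key_def comp_def simp del: cr.simps)
qed

lemma profile_right_eq:
  assumes "G.round_key (Suc s) u = H.round_key (Suc s) u'" "u \<in> G.V" "u' \<in> H.V"
    and global: "image_mset (wlB (Suc s)) (mset_set VB) = image_mset (wlA (Suc s)) (mset_set VA)"
  shows "image_mset (profile_G s u \<circ> RV) (mset_set VB) = image_mset (profile_H s u' \<circ> RV) (mset_set VA)"
proof (cases "\<exists>y0. u = RV y0")
  case True
  then obtain y0 where y0: "u = RV y0" by blast
  then obtain x0' where x0': "u' = RV x0'"
    using assms(1) by (cases u') (auto simp: G.round_key_def H.round_key_def)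
  have in_V: "y0 \<in> VB" "x0' \<in> VA" using assms(2,3) y0 x0' by simp_all
  have "wlB (Suc (Suc s)) y0 = wlA (Suc (Suc s)) x0'"
    using assms(1) y0 x0' by (simp add: G.round_key_def H.round_key_def del: cr.simps)
  hence "image_mset (\<lambda>x. (x = y0, EB y0 x, wlB (Suc s) x)) (mset_set VB)
      = image_mset (\<lambda>x. (x = x0', EA x0' x, wlA (Suc s) x)) (mset_set VA)"
    by (rule cr_profile_eq[OF G.B.finite_V G.A.finite_V in_V G.B.adj_irrefl G.A.adj_irrefl _ global])
  hence "image_mset (\<lambda>(p, q, c). (p, q, Inl (True, c))) (image_mset (\<lambda>x. (x = y0, EB y0 x, wlB (Suc s) x)) (mset_set VB))
      = image_mset (\<lambda>(p, q, c). (p, q, Inl (True, c))) (image_mset (\<lambda>x. (x = x0', EA x0' x, wlA (Suc s) x)) (mset_set VA))"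
    by simp
  thus ?thesis using y0 x0'
    by (simp add: G.round_key_def H.round_key_def image_mset.compositionality comp_def del: cr.simps)
next
  case False
  hence "\<not> (\<exists>x. u' = RV x)"
    using assms(1) by (cases u; cases u') (auto simp: G.round_key_def H.round_key_def)
  hence "image_mset (profile_H s u' \<circ> RV) (mset_set VA)
      = image_mset (\<lambda>c. (False, False, Inl (True, c))) (image_mset (wlA (Suc s)) (mset_set VA))"
    by (cases u') (auto simp: H.round_key_def image_mset.compositionality comp_def simp del: cr.simps)
  moreover have "image_mset (profile_G s u \<circ> RV) (mset_set VB)
      = image_mset (\<lambda>c. (False, False, Inl (True, c))) (image_mset (wlB (Suc s)) (mset_set VB))"
    using False by (cases u) (auto simp: G.round_key_def image_mset.compositionality comp_def simp del: cr.simps)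
  ultimately show ?thesis using global by simp
qed

lemma profile_eq:
  assumes global: "image_mset (wlB r) (mset_set VB) = image_mset (wlA r) (mset_set VA)" and "Suc s < r"
    and u: "u \<in> G.V" and u': "u' \<in> H.V" and key: "G.round_key (Suc s) u = H.round_key (Suc s) u'"
  shows "image_mset (profile_G s u) (mset_set G.V) = image_mset (profile_H s u') (mset_set H.V)"
proof -
  have "profile_G s u (gadget_vertex p) = profile_H s u' (gadget_vertex p)" if p: "p \<in> gadget_index m" for p
    using G.gadget_vertex_eq_iff_round_key[OF p u, of "Suc s"] H.gadget_vertex_eq_iff_round_key[OF p u', of "Suc s"]
    by (simp add: key p G.round_key_gadget_vertex H.round_key_gadget_vertex
        G.copy_adj_gadget_vertex H.copy_adj_gadget_vertex)
  hence "image_mset (profile_G s u \<circ> gadget_vertex) (mset_set (gadget_index m))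
      = image_mset (profile_H s u' \<circ> gadget_vertex) (mset_set (gadget_index m))"
    using finite_gadget_index by (intro image_mset_cong) simp
  moreover have "image_mset (wlB (Suc s)) (mset_set VB) = image_mset (wlA (Suc s)) (mset_set VA)"
    using cr_mset_eq_le[OF global] \<open>Suc s < r\<close> by simp
  ultimately show ?thesis
    using profile_left_eq[OF key u u'] profile_right_eq[OF key u u']
      image_mset_constr_V[OF G.A.finite_V G.B.finite_V, of "profile_G s u" m]
      image_mset_constr_V[OF G.A.finite_V G.A.finite_V, of "profile_H s u'" m]
    by simp
qed

lemma omega_eq:
  assumes "G.marked_adj_B = H.marked_adj_B" and "card G.V = card H.V"
    and global: "image_mset (wlB r) (mset_set VB) = image_mset (wlA r) (mset_set VA)"
  shows "s < r \<Longrightarrow> u \<in> G.V \<Longrightarrow> u' \<in> H.V \<Longrightarrow> G.round_key s u = H.round_key s u'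
     \<Longrightarrow> omega G.V G.E s u = omega H.V H.E s u'"
proof (induction s arbitrary: u u')
  case 0
  have "G.vtype_of u = H.vtype_of u'" by (rule vtype_of_eq_if_round_key_eq[OF 0(2,3,4)])
  hence "wstar G.V G.E u u = wstar H.V H.E u' u'"
    unfolding wstar_def assms(2) using walks_eq[OF assms(1) 0(2) 0(2) 0(3) 0(3)]
    by (simp add: G.copy_adj_irrefl H.copy_adj_irrefl)
  thus ?case by simp
next
  case (Suc s)
  have vtype: "G.vtype_of u = H.vtype_of u'" by (rule vtype_of_eq_if_round_key_eq[OF Suc(3,4,5)])
  have "omega G.V G.E s u = omega H.V H.E s u'"
    using Suc.IH[OF _ Suc(3,4) round_key_eq_Suc_imp[OF Suc(5)]] Suc(2) by simp
  moreover have "image_mset (\<lambda>y. (wstar G.V G.E u y, omega G.V G.E s y)) (mset_set G.V)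
      = image_mset (\<lambda>y. (wstar H.V H.E u' y, omega H.V H.E s y)) (mset_set H.V)"
  proof (rule image_mset_eq_transfer[OF G.finite_V H.finite_V profile_eq[OF global Suc(2,3,4,5)]])
    fix y y' assume y: "y \<in> G.V" and y': "y' \<in> H.V" and eq: "profile_G s u y = profile_H s u' y'"
    have "G.vtype_of y = H.vtype_of y'" by (rule vtype_of_eq_if_round_key_eq[OF y y', of s]) (use eq in simp)
    moreover have "G.copy_adj y u = H.copy_adj y' u'"
      using eq G.copy_adj_sym H.copy_adj_sym by simp
    ultimately have "wstar G.V G.E u y = wstar H.V H.E u' y'"
      unfolding wstar_def assms(2) using walks_eq[OF assms(1) Suc(3) y Suc(4) y' vtype] eq by auto
    moreover have "omega G.V G.E s y = omega H.V H.E s y'"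
      using Suc.IH[OF _ y y'] Suc(2) eq by simp
    ultimately show "(wstar G.V G.E u y, omega G.V G.E s y) = (wstar H.V H.E u' y', omega H.V H.E s y')"
      by simp
  qed
  ultimately show ?case by simp
qed

lemma marked_adj_B_eq:
  assumes global: "image_mset (wlB r) (mset_set VB) = image_mset (wlA r) (mset_set VA)" and "1 \<le> r"
  shows "G.marked_adj_B = H.marked_adj_B"
proof -
  have global1: "image_mset (wlB 1) (mset_set VB) = image_mset (wlA 1) (mset_set VA)"
    by (rule cr_mset_eq_le[OF global \<open>1 \<le> r\<close>])
  have wl1_marked: "wlB 1 (b j) = wlA 1 (a j)" if "1 \<le> j" "j \<le> m" for j
  proof -
    have "wlA 1 (a j) \<in># image_mset (wlB 1) (mset_set VB)"
      using global1 G.A.marked_in_V[OF that] G.A.finite_V by simp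
    then obtain y where y: "y \<in> VB" "wlB 1 y = wlA 1 (a j)" using G.B.finite_V by auto
    hence "col_of b m y = j"
      using G.B.round1_colour_cr[of y] G.A.round1_colour_cr[of "a j"] that by simp
    thus ?thesis using y that by simp
  qed
  show ?thesis
  proof (intro ext)
    fix i j
    show "G.marked_adj_B i j = H.marked_adj_B i j"
    proof (cases "1 \<le> i \<and> i \<le> m \<and> 1 \<le> j \<and> j \<le> m")
      case True
      hence "round1_nbr_colours (wlB 1 (b j)) = round1_nbr_colours (wlA 1 (a j))"
        using wl1_marked[of j] by (simp del: cr.simps)
      hence "{i\<in>{1..m}. EB (b i) (b j)} = {i\<in>{1..m}. EA (a i) (a j)}"
        using True by (simp only: G.B.round1_nbr_colours_cr[OF G.B.marked_in_V]
            G.A.round1_nbr_colours_cr[OF G.A.marked_in_V])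
      thus ?thesis using True by (auto simp: set_eq_iff)
    qed auto
  qed
qed

lemma omega_ms_eq:
  assumes global: "image_mset (wlB r) (mset_set VB) = image_mset (wlA r) (mset_set VA)" and "1 \<le> r"
  shows "omega_ms G.V G.E (r - 1) = omega_ms H.V H.E (r - 1)"
proof -
  obtain s where r: "r = Suc s" using \<open>1 \<le> r\<close> by (cases r) auto
  have "image_mset (G.round_key s \<circ> RV) (mset_set VB)
      = image_mset (\<lambda>c. Inl (True, c)) (image_mset (wlB r) (mset_set VB))"
    by (simp add: G.round_key_def comp_def image_mset.compositionality r del: cr.simps)
  moreover have "image_mset (H.round_key s \<circ> RV) (mset_set VA)
      = image_mset (\<lambda>c. Inl (True, c)) (image_mset (wlA r) (mset_set VA))"
    by (simp add: H.round_key_def comp_def image_mset.compositionality r del: cr.simps)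
  moreover have "image_mset (G.round_key s \<circ> gadget_vertex) (mset_set (gadget_index m))
      = image_mset (H.round_key s \<circ> gadget_vertex) (mset_set (gadget_index m))"
    using finite_gadget_index G.round_key_gadget_vertex H.round_key_gadget_vertex
    by (intro image_mset_cong) simp
  ultimately have keys: "image_mset (G.round_key s) (mset_set G.V) = image_mset (H.round_key s) (mset_set H.V)"
    using global image_mset_constr_V[OF G.A.finite_V G.B.finite_V, of "G.round_key s" m]
      image_mset_constr_V[OF G.A.finite_V G.A.finite_V, of "H.round_key s" m]
    by (simp add: G.round_key_def H.round_key_def comp_def)
  have "size (image_mset (G.round_key s) (mset_set G.V)) = size (image_mset (H.round_key s) (mset_set H.V))"
    using keys by simp
  hence "card G.V = card H.V" by simp
  show ?thesis unfolding omega_ms_def r diff_Suc_1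
    by (rule image_mset_eq_transfer[OF G.finite_V H.finite_V keys])
      (use omega_eq[OF marked_adj_B_eq[OF global \<open>1 \<le> r\<close>] \<open>card G.V = card H.V\<close> global] r in simp)
qed

end

section \<open>Colour refinement: part (1)\<close>

fun wlc_nbrs :: "wlc \<Rightarrow> wlc multiset" where
  "wlc_nbrs (WLStep _ M) = M"
| "wlc_nbrs (WLInit _) = {#}"

definition wlc_degree :: "wlc \<Rightarrow> nat" where
  "wlc_degree \<gamma> = size (wlc_nbrs \<gamma>)"

definition connector_like :: "wlc \<Rightarrow> bool" where
  "connector_like \<gamma> \<longleftrightarrow> 3 \<le> wlc_degree \<gamma> \<and> 1 \<in># image_mset wlc_degree (wlc_nbrs \<gamma>)"

definition pendant_like :: "wlc \<Rightarrow> bool" where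
  "pendant_like \<gamma> \<longleftrightarrow> wlc_degree \<gamma> = 1 \<and> (\<exists>e\<in>#image_mset wlc_degree (wlc_nbrs \<gamma>). 3 \<le> e)"

text \<open>A connecting vertex \<open>c_i\<close> has degree \<open>i + 2\<close>, so the degree of the connecting neighbour
  of an original vertex recovers its colour.\<close>

definition marked_label :: "wlc \<Rightarrow> nat" where
  "marked_label \<gamma> = (if \<exists>\<delta>\<in>#wlc_nbrs \<gamma>. connector_like \<delta>
     then wlc_degree (SOME \<delta>. \<delta> \<in># wlc_nbrs \<gamma> \<and> connector_like \<delta>) - 2 else 0)"

definition present_values :: "'x option multiset \<Rightarrow> 'x multiset" where
  "present_values M = image_mset the (filter_mset (\<lambda>p. p \<noteq> None) M)"

lemma present_values_Some_None:
  "present_values (image_mset (\<lambda>x. Some (f x)) N + image_mset (\<lambda>_. None) K) = image_mset f N"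
  unfolding present_values_def by (simp add: filter_mset_image_mset image_mset.compositionality comp_def)

context construction
begin

abbreviation "wlG \<equiv> cr V E (\<lambda>_. 0)"
abbreviation "deg z \<equiv> card (nbrs V E z)"

definition is_orig :: "('a, 'b) cv \<Rightarrow> bool" where
  "is_orig u \<longleftrightarrow> (\<exists>x\<in>VA. u = LV x) \<or> (\<exists>y\<in>VB. u = RV y)"

lemma wlc_degree_wlG: "wlc_degree (wlG (Suc j) u) = deg u"
  by (simp add: wlc_degree_def)

lemma wlc_nbrs_wlG: "wlc_nbrs (wlG (Suc j) u) = image_mset (wlG j) (mset_set (nbrs V E u))"
  by simp

lemma nbr_degrees_wlG: "image_mset wlc_degree (wlc_nbrs (wlG (Suc (Suc j)) u)) = image_mset deg (mset_set (nbrs V E u))"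
  by (simp only: wlc_nbrs_wlG image_mset.compositionality comp_def wlc_degree_wlG)

lemma connector_like_wlG:
  "connector_like (wlG (Suc (Suc j)) u) \<longleftrightarrow> 3 \<le> deg u \<and> (\<exists>z\<in>nbrs V E u. deg z = 1)"
  unfolding connector_like_def nbr_degrees_wlG using finite_nbrs[of u]
  by (auto simp: wlc_degree_wlG image_iff simp del: cr.simps) metis

lemma pendant_like_wlG:
  "pendant_like (wlG (Suc (Suc j)) u) \<longleftrightarrow> deg u = 1 \<and> (\<exists>z\<in>nbrs V E u. 3 \<le> deg z)"
  unfolding pendant_like_def nbr_degrees_wlG using finite_nbrs[of u]
  by (auto simp: wlc_degree_wlG simp del: cr.simps)

lemma deg_orig:
  assumes "is_orig u"
  shows "d \<le> deg u" "deg u \<le> d + 1"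
  using assms unfolding is_orig_def by (auto simp: card_nbrs_LV card_nbrs_RV)

lemma nbrs_orig:
  assumes "is_orig u" "z \<in> nbrs V E u"
  shows "is_orig z \<or> (deg u = d + 1 \<and> (\<exists>i. 1 \<le> i \<and> i \<le> m \<and> z = CV i))"
proof -
  from assms(1) consider (left) x where "x \<in> VA" "u = LV x" | (right) y where "y \<in> VB" "u = RV y"
    unfolding is_orig_def by blast
  thus ?thesis
  proof cases
    case (left x)
    thus ?thesis
      using assms(2) nbrs_LV_col[OF left(1)] card_nbrs_LV[OF left(1)] A.col_of_nonzero[of x]
        nbrs_subset[of VA EA x]
      by (cases "col_of a m x = 0") (auto simp: is_orig_def)
  next
    case (right y)
    thus ?thesis
      using assms(2) nbrs_RV_col[OF right(1)] card_nbrs_RV[OF right(1)] B.col_of_nonzero[of y]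
        nbrs_subset[of VB EB y]
      by (cases "col_of b m y = 0") (auto simp: is_orig_def)
  qed
qed

lemma deg_nbr_orig:
  assumes "is_orig u" "z \<in> nbrs V E u"
  shows "(d \<le> deg z \<and> deg z \<le> d + 1) \<or> 3 \<le> deg z"
  using nbrs_orig[OF assms] deg_orig[of z] card_nbrs_CV by force

lemma orig_not_connector:
  assumes "is_orig u"
  shows "\<not> (3 \<le> deg u \<and> (\<exists>z\<in>nbrs V E u. deg z = 1))"
  using deg_orig(2)[OF assms] deg_nbr_orig[OF assms] by fastforce

lemma orig_not_pendant:
  assumes "is_orig u" "1 \<le> d"
  shows "\<not> (deg u = 1 \<and> (\<exists>z\<in>nbrs V E u. 3 \<le> deg z))"
proof
  assume "deg u = 1 \<and> (\<exists>z\<in>nbrs V E u. 3 \<le> deg z)"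
  then obtain z where "deg u = 1" "z \<in> nbrs V E u" "3 \<le> deg z" by blast
  moreover from this have "d = 1" using deg_orig(1)[OF assms(1)] assms(2) by simp
  ultimately show False using nbrs_orig[OF assms(1)] deg_orig(2)[of z] by fastforce
qed

lemma connector_like_iff:
  assumes "u \<in> V" "1 \<le> d"
  shows "connector_like (wlG (Suc (Suc j)) u) \<longleftrightarrow> (\<exists>i. u = CV i)"
proof (cases u)
  case (CV i)
  hence i: "1 \<le> i" "i \<le> m" using assms(1) by simp_all
  have "PV i 1 \<in> nbrs V E u" "deg (PV i 1) = 1" "3 \<le> deg u"
    using CV nbrs_CV[OF i] card_nbrs_PV card_nbrs_CV[OF i] i by auto
  thus ?thesis using CV connector_like_wlG by blast
next
  case (PV i k)
  thus ?thesis using assms(1) connector_like_wlG card_nbrs_PV by simp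
next
  case (LV x)
  hence "is_orig u" using assms(1) by (simp add: is_orig_def)
  thus ?thesis using LV orig_not_connector connector_like_wlG by simp
next
  case (RV y)
  hence "is_orig u" using assms(1) by (simp add: is_orig_def)
  thus ?thesis using RV orig_not_connector connector_like_wlG by simp
qed

lemma pendant_like_iff:
  assumes "u \<in> V" "1 \<le> d"
  shows "pendant_like (wlG (Suc (Suc j)) u) \<longleftrightarrow> (\<exists>i k. u = PV i k)"
proof (cases u)
  case (CV i)
  thus ?thesis using assms(1) pendant_like_wlG card_nbrs_CV by simp
next
  case (PV i k)
  hence ik: "1 \<le> i" "i \<le> m" "1 \<le> k" "k \<le> i" using assms(1) by simp_all
  have "deg u = 1" "CV i \<in> nbrs V E u" "3 \<le> deg (CV i)"
    using PV nbrs_PV[OF ik] card_nbrs_PV[OF ik] card_nbrs_CV ik by auto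
  thus ?thesis using PV pendant_like_wlG by blast
next
  case (LV x)
  hence "is_orig u" using assms(1) by (simp add: is_orig_def)
  thus ?thesis using LV orig_not_pendant[OF _ assms(2)] pendant_like_wlG by simp
next
  case (RV y)
  hence "is_orig u" using assms(1) by (simp add: is_orig_def)
  thus ?thesis using RV orig_not_pendant[OF _ assms(2)] pendant_like_wlG by simp
qed

lemma marked_label_wlG:
  assumes "u \<in> V" "1 \<le> d"
    and conn_nbr: "\<And>z. z \<in> nbrs V E u \<and> (\<exists>i. z = CV i) \<longleftrightarrow> c \<noteq> 0 \<and> z = CV c"
    and "c \<noteq> 0 \<Longrightarrow> 1 \<le> c \<and> c \<le> m"
  shows "marked_label (wlG (Suc (Suc (Suc j))) u) = c"
proof -
  define M where "M = wlc_nbrs (wlG (Suc (Suc (Suc j))) u)"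
  have M: "M = image_mset (wlG (Suc (Suc j))) (mset_set (nbrs V E u))"
    unfolding M_def by (rule wlc_nbrs_wlG)
  have conn: "\<delta> \<in># M \<and> connector_like \<delta> \<longleftrightarrow> c \<noteq> 0 \<and> \<delta> = wlG (Suc (Suc j)) (CV c)" for \<delta>
  proof
    assume "\<delta> \<in># M \<and> connector_like \<delta>"
    then obtain z where z: "z \<in> nbrs V E u" "\<delta> = wlG (Suc (Suc j)) z" "connector_like \<delta>"
      using M finite_nbrs by auto
    moreover have "z \<in> V" using z(1) nbrs_subset[of V E u] by blast
    ultimately show "c \<noteq> 0 \<and> \<delta> = wlG (Suc (Suc j)) (CV c)"
      using connector_like_iff[OF _ assms(2)] conn_nbr[of z] by auto
  next
    assume c: "c \<noteq> 0 \<and> \<delta> = wlG (Suc (Suc j)) (CV c)"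
    hence "CV c \<in> nbrs V E u" "CV c \<in> V" using conn_nbr[of "CV c"] assms(4) by simp_all
    thus "\<delta> \<in># M \<and> connector_like \<delta>"
      using c M finite_nbrs connector_like_iff[OF _ assms(2)] by auto
  qed
  show ?thesis
  proof (cases "c = 0")
    case False
    have "(SOME \<delta>. \<delta> \<in># M \<and> connector_like \<delta>) = wlG (Suc (Suc j)) (CV c)"
      using conn False by simp
    moreover have "wlc_degree (wlG (Suc (Suc j)) (CV c)) = c + 2"
      using wlc_degree_wlG card_nbrs_CV assms(4) False by (simp del: cr.simps)
    ultimately show ?thesis using conn False unfolding marked_label_def M_def[symmetric] by auto
  next
    case True
    hence "\<not> (\<exists>\<delta>\<in>#M. connector_like \<delta>)" using conn by blast
    thus ?thesis using True unfolding marked_label_def M_def[symmetric] by simp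
  qed
qed

lemma marked_label_LV:
  "x \<in> VA \<Longrightarrow> 1 \<le> d \<Longrightarrow> marked_label (wlG (Suc (Suc (Suc j))) (LV x)) = col_of a m x"
  using A.col_of_nonzero[of x] by (intro marked_label_wlG) (auto simp: nbrs_LV_col)

lemma marked_label_RV:
  "y \<in> VB \<Longrightarrow> 1 \<le> d \<Longrightarrow> marked_label (wlG (Suc (Suc (Suc j))) (RV y)) = col_of b m y"
  using B.col_of_nonzero[of y] by (intro marked_label_wlG) (auto simp: nbrs_RV_col)

text \<open>The colour of an original vertex in the refinement of \<open>A'\<close> or \<open>B'\<close>; by
  \<open>side_colour_eq_if_wlG_eq\<close> it is determined by the uncoloured refinement of \<open>G\<close> three rounds
  later.\<close>

definition side_colour :: "nat \<Rightarrow> ('a, 'b) cv \<Rightarrow> wlc option" where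
  "side_colour k u = (case u of
       LV x \<Rightarrow> Some (cr VA EA (col_of a m) k x)
     | RV y \<Rightarrow> Some (cr VB EB (col_of b m) k y)
     | _ \<Rightarrow> None)"

lemma side_colour_None_iff: "side_colour k u = None \<longleftrightarrow> (\<exists>i. u = CV i) \<or> (\<exists>i j. u = PV i j)"
  by (cases u) (auto simp: side_colour_def)

lemma side_colour_gadget_vertex [simp]: "side_colour k (gadget_vertex p) = None"
  by (cases p) (simp add: side_colour_def)

lemma side_colour_funpow_prev: "side_colour j u = map_option (wlc_prev ^^ i) (side_colour (j + i) u)"
  by (cases u) (auto simp: side_colour_def wlc_prev_funpow_cr)

lemma side_colour_Suc:
  assumes "u \<in> V" "side_colour k u \<noteq> None"
  shows "side_colour (Suc k) u =
    Some (WLStep (the (side_colour k u)) (present_values (image_mset (side_colour k) (mset_set (nbrs V E u)))))"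
proof (cases u)
  case (LV x)
  define C where "C = (if col_of a m x = 0 then {} else {col_of a m x})"
  have N: "nbrs V E u = LV ` nbrs VA EA x \<union> CV ` C"
    using assms(1) LV nbrs_LV_col by (simp add: C_def)
  have "mset_set (nbrs V E u) = image_mset LV (mset_set (nbrs VA EA x)) + image_mset CV (mset_set C)"
    unfolding N by (subst mset_set_Union) (auto simp: C_def A.finite_nbrs image_mset_mset_set inj_on_def)
  hence "present_values (image_mset (side_colour k) (mset_set (nbrs V E u)))
      = image_mset (cr VA EA (col_of a m) k) (mset_set (nbrs VA EA x))"
    by (simp add: image_mset.compositionality comp_def side_colour_def present_values_Some_None del: cr.simps)
  thus ?thesis using LV by (simp add: side_colour_def)
next
  case (RV y)
  define C where "C = (if col_of b m y = 0 then {} else {col_of b m y})"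
  have N: "nbrs V E u = RV ` nbrs VB EB y \<union> CV ` C"
    using assms(1) RV nbrs_RV_col by (simp add: C_def)
  have "mset_set (nbrs V E u) = image_mset RV (mset_set (nbrs VB EB y)) + image_mset CV (mset_set C)"
    unfolding N by (subst mset_set_Union) (auto simp: C_def B.finite_nbrs image_mset_mset_set inj_on_def)
  hence "present_values (image_mset (side_colour k) (mset_set (nbrs V E u)))
      = image_mset (cr VB EB (col_of b m) k) (mset_set (nbrs VB EB y))"
    by (simp add: image_mset.compositionality comp_def side_colour_def present_values_Some_None del: cr.simps)
  thus ?thesis using RV by (simp add: side_colour_def)
qed (use assms(2) in \<open>simp_all add: side_colour_def\<close>)

lemma side_colour_0:
  assumes "u \<in> V" "1 \<le> d"
  shows "side_colour 0 u = (if connector_like (wlG 2 u) \<or> pendant_like (wlG 2 u) then None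
                           else Some (WLInit (marked_label (wlG 3 u))))"
proof -
  have "wlG 2 u = wlG (Suc (Suc 0)) u" "wlG 3 u = wlG (Suc (Suc (Suc 0))) u"
    by (simp_all add: numeral_2_eq_2 numeral_3_eq_3)
  thus ?thesis
    using assms(1) connector_like_iff[OF assms] pendant_like_iff[OF assms]
      marked_label_LV[OF _ assms(2)] marked_label_RV[OF _ assms(2)]
    by (cases u) (auto simp: side_colour_def simp del: cr.simps(2))
qed

end

context construction_pair
begin

lemma side_colour_eq_if_wlG_eq:
  assumes "1 \<le> d"
  shows "u \<in> G.V \<Longrightarrow> u' \<in> H.V \<Longrightarrow> G.wlG (k + 3) u = H.wlG (k + 3) u'
    \<Longrightarrow> G.side_colour k u = H.side_colour k u'"
proof (induction k arbitrary: u u')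
  case 0
  hence "G.wlG 3 u = H.wlG 3 u'" "G.wlG 2 u = H.wlG 2 u'" using cr_eq_le[of _ _ _ 3 _ _ _ _ _ 2] by simp_all
  thus ?case using G.side_colour_0[OF 0(1) assms] H.side_colour_0[OF 0(2) assms] by simp
next
  case (Suc k)
  have "G.wlG (Suc (k + 3)) u = H.wlG (Suc (k + 3)) u'" using Suc.prems(3) by simp
  hence root: "G.wlG (k + 3) u = H.wlG (k + 3) u'"
    and nbrs: "image_mset (G.wlG (k + 3)) (mset_set (nbrs G.V G.E u))
             = image_mset (H.wlG (k + 3)) (mset_set (nbrs H.V H.E u'))"
    by (simp_all only: cr_Suc_eq_iff)
  have IH: "G.side_colour k u = H.side_colour k u'" by (rule Suc.IH[OF Suc.prems(1,2) root])
  show ?case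
  proof (cases "G.side_colour k u = None")
    case True
    thus ?thesis using IH G.side_colour_None_iff H.side_colour_None_iff by metis
  next
    case False
    have "image_mset (G.side_colour k) (mset_set (nbrs G.V G.E u))
        = image_mset (H.side_colour k) (mset_set (nbrs H.V H.E u'))"
    proof (rule image_mset_eq_transfer[OF G.finite_nbrs H.finite_nbrs nbrs])
      fix z z' assume "z \<in> nbrs G.V G.E u" "z' \<in> nbrs H.V H.E u'" "G.wlG (k + 3) z = H.wlG (k + 3) z'"
      thus "G.side_colour k z = H.side_colour k z'"
        using Suc.IH nbrs_subset[of G.V G.E u] nbrs_subset[of H.V H.E u'] by blast
    qed
    thus ?thesis using G.side_colour_Suc[OF Suc.prems(1) False] H.side_colour_Suc[OF Suc.prems(2)] IH False
      by simp
  qed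
qed

lemma wl_mset_eq_if_wlG_mset_eq:
  assumes "1 \<le> d" "n \<le> k"
    and wlG_eq: "image_mset (G.wlG (k + 3)) (mset_set G.V) = image_mset (H.wlG (k + 3)) (mset_set H.V)"
  shows "image_mset (wlB n) (mset_set VB) = image_mset (wlA n) (mset_set VA)"
proof -
  obtain i where k: "k = n + i" using assms(2) le_Suc_ex by blast
  have "image_mset (G.side_colour k) (mset_set G.V) = image_mset (H.side_colour k) (mset_set H.V)"
    by (rule image_mset_eq_transfer[OF G.finite_V H.finite_V wlG_eq])
      (use side_colour_eq_if_wlG_eq[OF assms(1)] in blast)
  moreover have "image_mset (G.side_colour n) (mset_set G.V)
      = image_mset (map_option (wlc_prev ^^ i)) (image_mset (G.side_colour k) (mset_set G.V))"
    unfolding image_mset.compositionality comp_def k by (rule image_mset_cong) (rule G.side_colour_funpow_prev)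
  moreover have "image_mset (H.side_colour n) (mset_set H.V)
      = image_mset (map_option (wlc_prev ^^ i)) (image_mset (H.side_colour k) (mset_set H.V))"
    unfolding image_mset.compositionality comp_def k by (rule image_mset_cong) (rule H.side_colour_funpow_prev)
  ultimately have "image_mset (G.side_colour n) (mset_set G.V) = image_mset (H.side_colour n) (mset_set H.V)"
    by simp
  moreover have "G.side_colour n \<circ> LV = (\<lambda>x. Some (wlA n x))" "H.side_colour n \<circ> LV = (\<lambda>x. Some (wlA n x))"
    "G.side_colour n \<circ> RV = (\<lambda>x. Some (wlB n x))" "H.side_colour n \<circ> RV = (\<lambda>x. Some (wlA n x))"
    by (simp_all add: fun_eq_iff G.side_colour_def H.side_colour_def del: cr.simps)
  moreover have "G.side_colour n \<circ> gadget_vertex = H.side_colour n \<circ> gadget_vertex"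
    by (simp add: fun_eq_iff)
  ultimately have "image_mset (\<lambda>x. Some (wlB n x)) (mset_set VB) = image_mset (\<lambda>x. Some (wlA n x)) (mset_set VA)"
    using image_mset_constr_V[OF G.A.finite_V G.B.finite_V, of "G.side_colour n" m]
      image_mset_constr_V[OF G.A.finite_V G.A.finite_V, of "H.side_colour n" m]
    by simp
  hence "image_mset the (image_mset (\<lambda>x. Some (wlB n x)) (mset_set VB))
      = image_mset the (image_mset (\<lambda>x. Some (wlA n x)) (mset_set VA))"
    by simp
  thus ?thesis by (simp add: image_mset.compositionality comp_def del: cr.simps)
qed

lemma WL1_differ:
  assumes "WL1 VA EA (col_of a m) \<noteq> WL1 VB EB (col_of b m)"
  shows "WL1 G.V G.E (\<lambda>_. 0) \<noteq> WL1 H.V H.E (\<lambda>_. 0)"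
proof
  assume WL1_eq: "WL1 G.V G.E (\<lambda>_. 0) = WL1 H.V H.E (\<lambda>_. 0)"
  have "1 \<le> d \<and> 1 \<le> m"
    using assms G.A.WL1_degenerate G.B.WL1_degenerate by (metis One_nat_def Suc_leI not_gr0)
  hence "1 \<le> d" "1 \<le> m" by simp_all
  define N where "N = card G.V"
  have "card H.V = N"
    using arg_cong[OF WL1_eq, of size] unfolding N_def WL1_def by simp
  \<comment> \<open>\<open>G\<close> has at least \<open>n + 3\<close> vertices, so its refinement runs long enough to reach round \<open>n\<close>
    of \<open>A'\<close> and \<open>B'\<close>.\<close>
  have "insert (CV 1) (insert (PV 1 1) (insert (RV (b 1)) (LV ` VA))) \<subseteq> G.V"
    using \<open>1 \<le> m\<close> G.B.marked_in_V[of 1] by auto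
  moreover have "card (insert (CV 1) (insert (PV 1 1) (insert (RV (b 1)) (LV ` VA)))) = n + 3"
    using G.A.finite_V G.A.card_V by (auto simp: card_insert_if card_image inj_on_def)
  ultimately have "n + 3 \<le> N" unfolding N_def by (metis card_mono[OF G.finite_V])
  hence "image_mset (G.wlG (N - 3 + 3)) (mset_set G.V) = image_mset (H.wlG (N - 3 + 3)) (mset_set H.V)"
    using WL1_eq unfolding WL1_def N_def[symmetric] \<open>card H.V = N\<close> by simp
  moreover have "n \<le> N - 3" using \<open>n + 3 \<le> N\<close> by simp
  ultimately have "image_mset (wlB n) (mset_set VB) = image_mset (wlA n) (mset_set VA)"
    using wl_mset_eq_if_wlG_mset_eq[OF \<open>1 \<le> d\<close>] by blast
  thus False using assms unfolding WL1_def G.A.card_V G.B.card_V by simp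
qed

end

theorem lemma6p3:
  fixes VA :: "'a set" and EA :: "'a \<Rightarrow> 'a \<Rightarrow> bool"
    and VB :: "'b set" and EB :: "'b \<Rightarrow> 'b \<Rightarrow> bool"
    and a :: "nat \<Rightarrow> 'a" and b :: "nat \<Rightarrow> 'b"
    and n d l mu m :: nat
  assumes srgA: "srg VA EA n d l mu"
    and srgB: "srg VB EB n d l mu"
    and a_in: "a ` {1..m} \<subseteq> VA" and a_inj: "inj_on a {1..m}"
    and b_in: "b ` {1..m} \<subseteq> VB" and b_inj: "inj_on b {1..m}"
  shows "(WL1 VA EA (col_of a m) \<noteq> WL1 VB EB (col_of b m) \<longrightarrow>
            WL1 (constr_V VA VB m) (constr_E EA EB a b m) (\<lambda>_. 0)
              \<noteq> WL1 (constr_V VA VA m) (constr_E EA EA a a m) (\<lambda>_. 0))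
       \<and> (\<forall>r\<ge>1. image_mset (cr VA EA (col_of a m) r) (mset_set VA)
                 = image_mset (cr VB EB (col_of b m) r) (mset_set VB) \<longrightarrow>
            omega_ms (constr_V VA VB m) (constr_E EA EB a b m) (r - 1)
              = omega_ms (constr_V VA VA m) (constr_E EA EA a a m) (r - 1))"
proof -
  interpret A: coloured_srg VA EA a m n d l mu by unfold_locales (fact srgA a_in a_inj)+
  interpret B: coloured_srg VB EB b m n d l mu by unfold_locales (fact srgB b_in b_inj)+
  interpret construction_pair VA EA a VB EB b m n d l mu ..
  show ?thesis
    using WL1_differ omega_ms_eq[OF sym] by blast
qed

end
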